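(* Let $(V,\{\nu_n\})$ be an $L^\infty$-MOS and $(W,\{M_n(W)_+\},e)$ an abstract operator system, regarded as an $L^\infty$-MOS with order gauges $\omega_n(B)=\inf\{t>0: B\le tI_n\otimes e\}$. Suppose $\phi:V\to W$ is completely gauge-contractive. Then the unital extension $\tilde\phi:V_1\to W$, $\tilde\phi(x,\lambda)=\phi(x)+\lambda e$, is completely positive, where $V_1$ carries the cones $M_n(V_1)_+=\{(A,X):u_n(-A,-X)=0\}$.
   Context: An $L^\infty$-MOS is a complex $*$-vector space $V$ ($M_n(V)$ with $(x_{ij})^*=(x_{ji}^* )$, self-adjoint part $M_n(V)_{sa}$) with proper gauges $\nu_n:M_n(V)_{sa}\to[0,\infty)$ (subadditive, positively homogeneous, $\nu_n(A)=\nu_n(-A)=0\Rightarrow A=0$) such that $\nu_k(X^*AX)\le\|X\|^2\nu_n(A)$ for scalar $X\in M_{n,k}$ and $\nu_{n+k}(A\oplus B)=\max\{\nu_n(A),\nu_k(B)\}$. An abstract operator system is a $*$-vector space with proper cones $M_n(W)_+\subseteq M_n(W)_{sa}$ closed under direct sums and scalar conjugations $B\mapsto XBX^*$, and $e$ such that each $(M_n(W)_{sa},M_n(W)_+,I_n\otimes e)$ is an Archimedean order unit space. A linear map $\phi:(V,\{\nu_n\})\to(W,\{\omega_n\})$ is completely gauge-contractive if $\phi(x^* )=\phi(x)^*$ and $\omega_n(\phi^{(n)}(A))\le\nu_n(A)$ for all $n$ and $A\in M_n(V)_{sa}$. Unitization: $V_1=V\oplus\mathbb{C}$, $M_n(V_1)=M_n(V)\oplus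 M_n$, $(A,X)^*=(A^*,X^* )$, $X_t=tI_n-X$, $Y\gg0$ means positive invertible, $u_n(A,X)=\inf\{t>0:X_t\gg0,\ \nu_n(X_t^{-1/2}AX_t^{-1/2})\le1\}$. Completely positive means each $\tilde\phi^{(n)}$ maps $M_n(V_1)_+$ into $M_n(W)_+$. *)

theory Defs
  imports "HOL-Analysis.Analysis"
begin

(* Matrices over a type are represented as functions nat => nat => 'a;
   an n x n matrix is one vanishing outside the index range {0..<n}^2.
   A complex vector space is a type 'v :: ab_group_add with a scalar
   multiplication smul :: complex => 'v => 'v (locale vector_space),
   and an involution st. *)

definition star_space :: "(complex \<Rightarrow> 'v::ab_group_add \<Rightarrow> 'v) \<Rightarrow> ('v \<Rightarrow> 'v) \<Rightarrow> bool" where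
  "star_space smul st \<longleftrightarrow> vector_space smul \<and> (\<forall>x. st (st x) = x)
     \<and> (\<forall>x y. st (x + y) = st x + st y) \<and> (\<forall>c x. st (smul c x) = smul (cnj c) (st x))"

definition mat_on :: "nat \<Rightarrow> (nat \<Rightarrow> nat \<Rightarrow> 'a::zero) \<Rightarrow> bool" where
  "mat_on n A \<longleftrightarrow> (\<forall>i j. \<not> (i < n \<and> j < n) \<longrightarrow> A i j = 0)"

definition msa :: "('a::zero \<Rightarrow> 'a) \<Rightarrow> nat \<Rightarrow> (nat \<Rightarrow> nat \<Rightarrow> 'a) set" where
  "msa st n = {A. mat_on n A \<and> (\<forall>i<n. \<forall>j<n. A i j = st (A j i))}"

definition mzero :: "nat \<Rightarrow> nat \<Rightarrow> 'a::zero" where "mzero = (\<lambda>i j. 0)"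
definition madd :: "(nat \<Rightarrow> nat \<Rightarrow> 'a::plus) \<Rightarrow> (nat \<Rightarrow> nat \<Rightarrow> 'a) \<Rightarrow> nat \<Rightarrow> nat \<Rightarrow> 'a" where
  "madd A B = (\<lambda>i j. A i j + B i j)"
definition mneg :: "(nat \<Rightarrow> nat \<Rightarrow> 'a::uminus) \<Rightarrow> nat \<Rightarrow> nat \<Rightarrow> 'a" where
  "mneg A = (\<lambda>i j. - A i j)"
definition mscale :: "(complex \<Rightarrow> 'v \<Rightarrow> 'v) \<Rightarrow> complex \<Rightarrow> (nat \<Rightarrow> nat \<Rightarrow> 'v) \<Rightarrow> nat \<Rightarrow> nat \<Rightarrow> 'v" where
  "mscale smul c A = (\<lambda>i j. smul c (A i j))"

definition idt :: "nat \<Rightarrow> 'a::zero \<Rightarrow> nat \<Rightarrow> nat \<Rightarrow> 'a" where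
  "idt n e = (\<lambda>i j. if i < n \<and> j < n \<and> i = j then e else 0)"

text \<open>scalar conjugation X^* A X for A in M_n(V), X in M_{n,k}; result in M_k(V)\<close>
definition sconj :: "(complex \<Rightarrow> 'v::ab_group_add \<Rightarrow> 'v) \<Rightarrow> nat \<Rightarrow> nat \<Rightarrow> (nat \<Rightarrow> nat \<Rightarrow> complex)
    \<Rightarrow> (nat \<Rightarrow> nat \<Rightarrow> 'v) \<Rightarrow> nat \<Rightarrow> nat \<Rightarrow> 'v" where
  "sconj smul n k X A = (\<lambda>i j. if i < k \<and> j < k
      then (\<Sum>p<n. \<Sum>q<n. smul (cnj (X p i) * X q j) (A p q)) else 0)"

definition dsum :: "nat \<Rightarrow> nat \<Rightarrow> (nat \<Rightarrow> nat \<Rightarrow> 'a::zero) \<Rightarrow> (nat \<Rightarrow> nat \<Rightarrow> 'a) \<Rightarrow> nat \<Rightarrow> nat \<Rightarrow> 'a" where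
  "dsum n k A B = (\<lambda>i j. if i < n \<and> j < n then A i j
      else if n \<le> i \<and> i < n + k \<and> n \<le> j \<and> j < n + k then B (i - n) (j - n) else 0)"

definition opnorm :: "nat \<Rightarrow> nat \<Rightarrow> (nat \<Rightarrow> nat \<Rightarrow> complex) \<Rightarrow> real" where
  "opnorm n k X = Sup {sqrt (\<Sum>i<n. (cmod (\<Sum>j<k. X i j * v j))\<^sup>2) | v. (\<Sum>j<k. (cmod (v j))\<^sup>2) \<le> 1}"

definition proper_gauge :: "(complex \<Rightarrow> 'v::ab_group_add \<Rightarrow> 'v) \<Rightarrow> ('v \<Rightarrow> 'v) \<Rightarrow> nat
    \<Rightarrow> ((nat \<Rightarrow> nat \<Rightarrow> 'v) \<Rightarrow> real) \<Rightarrow> bool" where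
  "proper_gauge smul st n g \<longleftrightarrow>
     (\<forall>A\<in>msa st n. 0 \<le> g A)
   \<and> (\<forall>A\<in>msa st n. \<forall>B\<in>msa st n. g (madd A B) \<le> g A + g B)
   \<and> (\<forall>A\<in>msa st n. \<forall>t::real. 0 \<le> t \<longrightarrow> g (mscale smul (complex_of_real t) A) = t * g A)
   \<and> (\<forall>A\<in>msa st n. g A = 0 \<and> g (mneg A) = 0 \<longrightarrow> A = mzero)"

definition Linf_MOS :: "(complex \<Rightarrow> 'v::ab_group_add \<Rightarrow> 'v) \<Rightarrow> ('v \<Rightarrow> 'v)
    \<Rightarrow> (nat \<Rightarrow> (nat \<Rightarrow> nat \<Rightarrow> 'v) \<Rightarrow> real) \<Rightarrow> bool" where
  "Linf_MOS smul st \<nu> \<longleftrightarrow> star_space smul st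
   \<and> (\<forall>n>0. proper_gauge smul st n (\<nu> n))
   \<and> (\<forall>n>0. \<forall>k>0. \<forall>X. \<forall>A\<in>msa st n.
        \<nu> k (sconj smul n k X A) \<le> (opnorm n k X)\<^sup>2 * \<nu> n A)
   \<and> (\<forall>n>0. \<forall>k>0. \<forall>A\<in>msa st n. \<forall>B\<in>msa st k.
        \<nu> (n + k) (dsum n k A B) = max (\<nu> n A) (\<nu> k B))"

definition operator_system :: "(complex \<Rightarrow> 'w::ab_group_add \<Rightarrow> 'w) \<Rightarrow> ('w \<Rightarrow> 'w)
    \<Rightarrow> (nat \<Rightarrow> (nat \<Rightarrow> nat \<Rightarrow> 'w) set) \<Rightarrow> 'w \<Rightarrow> bool" where
  "operator_system smul st P e \<longleftrightarrow> star_space smul st \<and> st e = e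
   \<and> (\<forall>n>0. P n \<subseteq> msa st n)
   \<and> (\<forall>n>0. \<forall>A\<in>P n. \<forall>B\<in>P n. madd A B \<in> P n)
   \<and> (\<forall>n>0. \<forall>A\<in>P n. \<forall>t::real. 0 \<le> t \<longrightarrow> mscale smul (complex_of_real t) A \<in> P n)
   \<and> (\<forall>n>0. \<forall>A\<in>P n. mneg A \<in> P n \<longrightarrow> A = mzero)
   \<and> (\<forall>n>0. \<forall>k>0. \<forall>A\<in>P n. \<forall>B\<in>P k. dsum n k A B \<in> P (n + k))
   \<and> (\<forall>n>0. \<forall>k>0. \<forall>X. \<forall>B\<in>P n. sconj smul n k X B \<in> P k)
   \<and> (\<forall>n>0. \<forall>A\<in>msa st n. \<exists>t::real. 0 < t \<and>
        madd (idt n (smul (complex_of_real t) e)) (mneg A) \<in> P n)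
   \<and> (\<forall>n>0. \<forall>A\<in>msa st n. (\<forall>\<epsilon>::real. 0 < \<epsilon> \<longrightarrow>
        madd (idt n (smul (complex_of_real \<epsilon>) e)) A \<in> P n) \<longrightarrow> A \<in> P n)"

definition order_gauge :: "(complex \<Rightarrow> 'w::ab_group_add \<Rightarrow> 'w) \<Rightarrow> (nat \<Rightarrow> (nat \<Rightarrow> nat \<Rightarrow> 'w) set)
    \<Rightarrow> 'w \<Rightarrow> nat \<Rightarrow> (nat \<Rightarrow> nat \<Rightarrow> 'w) \<Rightarrow> real" where
  "order_gauge smul P e n B = Inf {t::real. 0 < t \<and>
       madd (idt n (smul (complex_of_real t) e)) (mneg B) \<in> P n}"

definition mapn :: "nat \<Rightarrow> ('v \<Rightarrow> 'w::zero) \<Rightarrow> (nat \<Rightarrow> nat \<Rightarrow> 'v) \<Rightarrow> nat \<Rightarrow> nat \<Rightarrow> 'w" where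
  "mapn n f A = (\<lambda>i j. if i < n \<and> j < n then f (A i j) else 0)"

definition completely_gauge_contractive :: "(complex \<Rightarrow> 'v::ab_group_add \<Rightarrow> 'v) \<Rightarrow> ('v \<Rightarrow> 'v)
    \<Rightarrow> (nat \<Rightarrow> (nat \<Rightarrow> nat \<Rightarrow> 'v) \<Rightarrow> real)
    \<Rightarrow> (complex \<Rightarrow> 'w::ab_group_add \<Rightarrow> 'w) \<Rightarrow> ('w \<Rightarrow> 'w)
    \<Rightarrow> (nat \<Rightarrow> (nat \<Rightarrow> nat \<Rightarrow> 'w) \<Rightarrow> real) \<Rightarrow> ('v \<Rightarrow> 'w) \<Rightarrow> bool" where
  "completely_gauge_contractive smulV stV \<nu> smulW stW \<omega> \<phi> \<longleftrightarrow>
     Vector_Spaces.linear smulV smulW \<phi>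
   \<and> (\<forall>x. \<phi> (stV x) = stW (\<phi> x))
   \<and> (\<forall>n>0. \<forall>A\<in>msa stV n. \<omega> n (mapn n \<phi> A) \<le> \<nu> n A)"

definition cmmul :: "nat \<Rightarrow> (nat \<Rightarrow> nat \<Rightarrow> complex) \<Rightarrow> (nat \<Rightarrow> nat \<Rightarrow> complex) \<Rightarrow> nat \<Rightarrow> nat \<Rightarrow> complex" where
  "cmmul n X Y = (\<lambda>i j. if i < n \<and> j < n then (\<Sum>p<n. X i p * Y p j) else 0)"

definition cid :: "nat \<Rightarrow> nat \<Rightarrow> nat \<Rightarrow> complex" where
  "cid n = idt n 1"

definition pos_inv :: "nat \<Rightarrow> (nat \<Rightarrow> nat \<Rightarrow> complex) \<Rightarrow> bool" where
  "pos_inv n Y \<longleftrightarrow> Y \<in> msa cnj n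
     \<and> (\<forall>v. 0 \<le> Re (\<Sum>i<n. \<Sum>j<n. cnj (v i) * Y i j * v j))
     \<and> (\<exists>Z. mat_on n Z \<and> cmmul n Y Z = cid n \<and> cmmul n Z Y = cid n)"

definition inv_sqrt :: "nat \<Rightarrow> (nat \<Rightarrow> nat \<Rightarrow> complex) \<Rightarrow> nat \<Rightarrow> nat \<Rightarrow> complex" where
  "inv_sqrt n Y = (THE S. mat_on n S \<and> pos_inv n S \<and> cmmul n (cmmul n S S) Y = cid n)"

definition shiftm :: "nat \<Rightarrow> real \<Rightarrow> (nat \<Rightarrow> nat \<Rightarrow> complex) \<Rightarrow> nat \<Rightarrow> nat \<Rightarrow> complex" where
  "shiftm n t X = (\<lambda>i j. if i < n \<and> j < n then (if i = j then complex_of_real t else 0) - X i j else 0)"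

definition unorm :: "(complex \<Rightarrow> 'v::ab_group_add \<Rightarrow> 'v) \<Rightarrow> (nat \<Rightarrow> (nat \<Rightarrow> nat \<Rightarrow> 'v) \<Rightarrow> real)
    \<Rightarrow> nat \<Rightarrow> (nat \<Rightarrow> nat \<Rightarrow> 'v) \<Rightarrow> (nat \<Rightarrow> nat \<Rightarrow> complex) \<Rightarrow> real" where
  "unorm smul \<nu> n A X = Inf {t::real. 0 < t \<and> pos_inv n (shiftm n t X)
      \<and> \<nu> n (sconj smul n n (inv_sqrt n (shiftm n t X)) A) \<le> 1}"

definition unit_pos :: "(complex \<Rightarrow> 'v::ab_group_add \<Rightarrow> 'v) \<Rightarrow> ('v \<Rightarrow> 'v)
    \<Rightarrow> (nat \<Rightarrow> (nat \<Rightarrow> nat \<Rightarrow> 'v) \<Rightarrow> real) \<Rightarrow> nat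
    \<Rightarrow> ((nat \<Rightarrow> nat \<Rightarrow> 'v) \<times> (nat \<Rightarrow> nat \<Rightarrow> complex)) set" where
  "unit_pos smul st \<nu> n = {(A, X). A \<in> msa st n \<and> X \<in> msa cnj n
      \<and> unorm smul \<nu> n (mneg A) (mneg X) = 0}"

definition unital_ext_n :: "('w \<Rightarrow> 'w \<Rightarrow> 'w) \<Rightarrow> (complex \<Rightarrow> 'w::ab_group_add \<Rightarrow> 'w) \<Rightarrow> ('v \<Rightarrow> 'w) \<Rightarrow> 'w \<Rightarrow> nat
    \<Rightarrow> (nat \<Rightarrow> nat \<Rightarrow> 'v) \<times> (nat \<Rightarrow> nat \<Rightarrow> complex) \<Rightarrow> nat \<Rightarrow> nat \<Rightarrow> 'w" where
  "unital_ext_n pl smul \<phi> e n AX = (\<lambda>i j. if i < n \<and> j < n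
      then pl (\<phi> (fst AX i j)) (smul (snd AX i j) e) else 0)"

definition completely_positive_unital_ext :: "(complex \<Rightarrow> 'v::ab_group_add \<Rightarrow> 'v) \<Rightarrow> ('v \<Rightarrow> 'v)
    \<Rightarrow> (nat \<Rightarrow> (nat \<Rightarrow> nat \<Rightarrow> 'v) \<Rightarrow> real)
    \<Rightarrow> (complex \<Rightarrow> 'w::ab_group_add \<Rightarrow> 'w) \<Rightarrow> (nat \<Rightarrow> (nat \<Rightarrow> nat \<Rightarrow> 'w) set) \<Rightarrow> 'w
    \<Rightarrow> ('v \<Rightarrow> 'w) \<Rightarrow> bool" where
  "completely_positive_unital_ext smulV stV \<nu> smulW P e \<phi> \<longleftrightarrow>
     (\<forall>n>0. \<forall>AX\<in>unit_pos smulV stV \<nu> n. unital_ext_n (+) smulW \<phi> e n AX \<in> P n)"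

end

theory Submission
  imports Defs
begin

text \<open>
  Let \<open>(A, X)\<close> be positive in the unitization, i.e. \<open>u\<^sub>n(-A, -X) = 0\<close>, and put
  \<open>Y\<^sub>t = X + tI\<close>. For each \<open>t\<close> in the set whose infimum is \<open>u\<^sub>n(-A, -X)\<close>, the matrix
  \<open>S = Y\<^sub>t^(-1/2)\<close> satisfies \<open>\<nu>\<^sub>n(S(-A)S) \<le> 1\<close>, so gauge contractivity and the
  Archimedean property give \<open>I \<otimes> e + \<phi>\<^sub>n(SAS) \<ge> 0\<close>. Conjugating with \<open>R = S Y\<^sub>t\<close>,
  for which \<open>SR = I\<close> and \<open>R\<^sup>*R = Y\<^sub>t\<close>, yields \<open>\<phi>\<^sub>n(A) + Y\<^sub>t \<otimes> e \<ge> 0\<close>, that is,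
  \<open>\<phi>\<^sub>n(A, X) + tI \<otimes> e \<ge> 0\<close> for the unital extension. As \<open>t\<close> can be taken arbitrarily
  small, the Archimedean property gives \<open>\<phi>\<^sub>n(A, X) \<ge> 0\<close>.

  The matrix analysis behind this (inverses and positive inverse square roots of positive
  definite matrices) uses the binomial series \<open>(I - H)\<^sup>r = \<Sum>\<^sub>k (r choose k) (-H)\<^sup>k\<close>
  for contractions \<open>H\<close>.
\<close>

section \<open>Complex matrices and quadratic forms\<close>

definition cadj :: "(nat \<Rightarrow> nat \<Rightarrow> complex) \<Rightarrow> nat \<Rightarrow> nat \<Rightarrow> complex" where
  "cadj R = (\<lambda>i j. cnj (R j i))"

definition cmatvec :: "nat \<Rightarrow> (nat \<Rightarrow> nat \<Rightarrow> complex) \<Rightarrow> (nat \<Rightarrow> complex) \<Rightarrow> nat \<Rightarrow> complex" where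
  "cmatvec n A v = (\<lambda>i. \<Sum>j<n. A i j * v j)"

definition cinner :: "nat \<Rightarrow> (nat \<Rightarrow> complex) \<Rightarrow> (nat \<Rightarrow> complex) \<Rightarrow> complex" where
  "cinner n u w = (\<Sum>i<n. cnj (u i) * w i)"

definition cnorm2 :: "nat \<Rightarrow> (nat \<Rightarrow> complex) \<Rightarrow> real" where
  "cnorm2 n v = (\<Sum>i<n. (cmod (v i))\<^sup>2)"

definition hermitian :: "nat \<Rightarrow> (nat \<Rightarrow> nat \<Rightarrow> complex) \<Rightarrow> bool" where
  "hermitian n H \<longleftrightarrow> (\<forall>i<n. \<forall>j<n. H i j = cnj (H j i))"

definition qform :: "nat \<Rightarrow> (nat \<Rightarrow> nat \<Rightarrow> complex) \<Rightarrow> (nat \<Rightarrow> complex) \<Rightarrow> real" where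
  "qform n H v = Re (cinner n v (cmatvec n H v))"

definition frob2 :: "nat \<Rightarrow> (nat \<Rightarrow> nat \<Rightarrow> complex) \<Rightarrow> real" where
  "frob2 n A = (\<Sum>i<n. \<Sum>j<n. (cmod (A i j))\<^sup>2)"

definition cscale :: "complex \<Rightarrow> (nat \<Rightarrow> nat \<Rightarrow> complex) \<Rightarrow> nat \<Rightarrow> nat \<Rightarrow> complex" where
  "cscale c A = (\<lambda>i j. c * A i j)"

lemma cmmul_in: "i < n \<Longrightarrow> j < n \<Longrightarrow> cmmul n A B i j = (\<Sum>p<n. A i p * B p j)"
  by (simp add: cmmul_def)

lemma cmmul_out: "\<not> (i < n \<and> j < n) \<Longrightarrow> cmmul n A B i j = 0"
  unfolding cmmul_def by auto

lemma mat_on_cmmul[simp]: "mat_on n (cmmul n A B)"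
  unfolding mat_on_def by (intro allI impI) (rule cmmul_out)

lemma cmmul_assoc: "cmmul n (cmmul n A B) C = cmmul n A (cmmul n B C)"
proof (intro ext)
  fix i j
  show "cmmul n (cmmul n A B) C i j = cmmul n A (cmmul n B C) i j"
  proof (cases "i < n \<and> j < n")
    case True
    have "cmmul n (cmmul n A B) C i j = (\<Sum>p<n. (\<Sum>q<n. A i q * B q p) * C p j)"
      using True by (simp add: cmmul_in)
    also have "\<dots> = (\<Sum>p<n. \<Sum>q<n. A i q * B q p * C p j)" by (simp add: sum_distrib_right)
    also have "\<dots> = (\<Sum>q<n. \<Sum>p<n. A i q * B q p * C p j)" by (rule sum.swap)
    also have "\<dots> = (\<Sum>q<n. A i q * (\<Sum>p<n. B q p * C p j))" by (simp add: sum_distrib_left mult.assoc)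
    also have "\<dots> = cmmul n A (cmmul n B C) i j" using True by (simp add: cmmul_in)
    finally show ?thesis .
  qed (simp add: cmmul_out)
qed

lemma cid_in: "cid n i j = (if i < n \<and> j < n \<and> i = j then 1 else 0)"
  by (simp add: cid_def idt_def)

lemma cmmul_cid_left: "mat_on n A \<Longrightarrow> cmmul n (cid n) A = A"
proof (intro ext)
  fix i j assume A: "mat_on n A"
  show "cmmul n (cid n) A i j = A i j"
  proof (cases "i < n \<and> j < n")
    case True
    have "cmmul n (cid n) A i j = (\<Sum>p<n. (if i = p then A p j else 0))"
      unfolding cmmul_in[OF True[THEN conjunct1] True[THEN conjunct2]]
      by (rule sum.cong) (use True in \<open>auto simp: cid_in\<close>)
    also have "\<dots> = A i j" using True by (simp add: sum.delta)
    finally show ?thesis .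
  qed (use A in \<open>auto simp: cmmul_out mat_on_def\<close>)
qed

lemma cmmul_cid_right: "mat_on n A \<Longrightarrow> cmmul n A (cid n) = A"
proof (intro ext)
  fix i j assume A: "mat_on n A"
  show "cmmul n A (cid n) i j = A i j"
  proof (cases "i < n \<and> j < n")
    case True
    have "cmmul n A (cid n) i j = (\<Sum>p<n. (if p = j then A i p else 0))"
      unfolding cmmul_in[OF True[THEN conjunct1] True[THEN conjunct2]]
      by (rule sum.cong) (use True in \<open>auto simp: cid_in\<close>)
    also have "\<dots> = A i j" using True by (simp add: sum.delta')
    finally show ?thesis .
  qed (use A in \<open>auto simp: cmmul_out mat_on_def\<close>)
qed

lemma mat_on_mneg[simp]:
  fixes A :: "nat \<Rightarrow> nat \<Rightarrow> 'a::ab_group_add"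
  shows "mat_on n A \<Longrightarrow> mat_on n (mneg A)" by (simp add: mat_on_def mneg_def)

lemma mat_on_cid[simp]: "mat_on n (cid n)" by (simp add: mat_on_def cid_in)

lemma cmatvec_cmmul: "i < n \<Longrightarrow> cmatvec n (cmmul n A B) v i = cmatvec n A (cmatvec n B v) i"
proof -
  assume i: "i < n"
  have "cmatvec n (cmmul n A B) v i = (\<Sum>j<n. (\<Sum>p<n. A i p * B p j) * v j)"
    unfolding cmatvec_def using i by (intro sum.cong) (auto simp: cmmul_in)
  also have "\<dots> = (\<Sum>j<n. \<Sum>p<n. A i p * B p j * v j)" by (simp add: sum_distrib_right)
  also have "\<dots> = (\<Sum>p<n. \<Sum>j<n. A i p * B p j * v j)" by (rule sum.swap)
  also have "\<dots> = cmatvec n A (cmatvec n B v) i" by (simp add: cmatvec_def sum_distrib_left mult.assoc)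
  finally show ?thesis .
qed

lemma cmatvec_cid: "i < n \<Longrightarrow> cmatvec n (cid n) v i = v i"
proof -
  assume i: "i < n"
  have "cmatvec n (cid n) v i = (\<Sum>j<n. if i = j then v j else 0)"
    unfolding cmatvec_def by (rule sum.cong) (auto simp: cid_in i)
  then show ?thesis using i by simp
qed

lemma cinner_cong: "(\<And>j. j < n \<Longrightarrow> u j = u' j) \<Longrightarrow> (\<And>j. j < n \<Longrightarrow> w j = w' j) \<Longrightarrow> cinner n u w = cinner n u' w'"
  unfolding cinner_def by (intro sum.cong) auto

lemma cnorm2_cong: "(\<And>j. j < n \<Longrightarrow> u j = w j) \<Longrightarrow> cnorm2 n u = cnorm2 n w"
  unfolding cnorm2_def by (intro sum.cong) auto

lemma cnorm2_nonneg: "0 \<le> cnorm2 n v" unfolding cnorm2_def by (intro sum_nonneg) auto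

lemma cnj_mult_self: "cnj z * z = complex_of_real ((cmod z)\<^sup>2)"
  by (metis complex_norm_square mult.commute)

lemma cinner_self: "cinner n v v = complex_of_real (cnorm2 n v)"
  unfolding cinner_def cnorm2_def of_real_sum by (rule sum.cong) (simp_all only: cnj_mult_self)

lemma cinner_cnj: "cnj (cinner n u w) = cinner n w u"
  unfolding cinner_def by (simp add: mult.commute)

lemma cinner_adj: "cinner n u (cmatvec n A w) = cinner n (cmatvec n (cadj A) u) w"
proof -
  have "cinner n u (cmatvec n A w) = (\<Sum>i<n. \<Sum>j<n. cnj (u i) * A i j * w j)"
    by (simp add: cinner_def cmatvec_def sum_distrib_left mult.assoc)
  also have "\<dots> = (\<Sum>j<n. \<Sum>i<n. cnj (u i) * A i j * w j)" by (rule sum.swap)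
  also have "\<dots> = (\<Sum>j<n. (\<Sum>i<n. A i j * cnj (u i)) * w j)"
    by (simp add: sum_distrib_right sum_distrib_left mult_ac)
  also have "\<dots> = cinner n (cmatvec n (cadj A) u) w"
    by (simp add: cinner_def cmatvec_def cadj_def cnj_sum)
  finally show ?thesis .
qed

lemma hermitianD: "hermitian n A \<Longrightarrow> i < n \<Longrightarrow> j < n \<Longrightarrow> A i j = cnj (A j i)"
  unfolding hermitian_def by blast

lemma hermitian_cmatvec_adj: "hermitian n A \<Longrightarrow> i < n \<Longrightarrow> cmatvec n (cadj A) u i = cmatvec n A u i"
  unfolding cmatvec_def cadj_def by (intro sum.cong refl) (metis hermitianD lessThan_iff)

lemma hermitian_cinner: "hermitian n A \<Longrightarrow> cinner n u (cmatvec n A w) = cinner n (cmatvec n A u) w"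
  unfolding cinner_adj by (rule cinner_cong) (simp_all add: hermitian_cmatvec_adj)

lemma cmod_cinner_le: "cmod (cinner n u w) \<le> sqrt (cnorm2 n u) * sqrt (cnorm2 n w)"
proof -
  have "cmod (cinner n u w) \<le> (\<Sum>i<n. cmod (u i) * cmod (w i))"
    unfolding cinner_def by (rule order_trans[OF norm_sum]) (simp add: norm_mult)
  also have "\<dots> = (\<Sum>i<n. \<bar>cmod (u i)\<bar> * \<bar>cmod (w i)\<bar>)" by simp
  also have "\<dots> \<le> L2_set (\<lambda>i. cmod (u i)) {..<n} * L2_set (\<lambda>i. cmod (w i)) {..<n}"
    by (rule L2_set_mult_ineq)
  also have "\<dots> = sqrt (cnorm2 n u) * sqrt (cnorm2 n w)" by (simp add: L2_set_def cnorm2_def)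
  finally show ?thesis .
qed

lemma cmod_cinner_sq: "(cmod (cinner n u w))\<^sup>2 \<le> cnorm2 n u * cnorm2 n w"
proof -
  have "(cmod (cinner n u w))\<^sup>2 \<le> (sqrt (cnorm2 n u) * sqrt (cnorm2 n w))\<^sup>2"
    by (rule power_mono[OF cmod_cinner_le]) simp
  also have "\<dots> = cnorm2 n u * cnorm2 n w" by (simp add: power_mult_distrib cnorm2_nonneg)
  finally show ?thesis .
qed

lemma cmatvec_lin: "cmatvec n H (\<lambda>i. u i + c * w i) = (\<lambda>i. cmatvec n H u i + c * cmatvec n H w i)"
  unfolding cmatvec_def by (simp add: algebra_simps sum.distrib sum_distrib_left)

lemma cinner_lin_left: "cinner n (\<lambda>i. u i + c * w i) x = cinner n u x + cnj c * cinner n w x"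
  unfolding cinner_def by (simp add: algebra_simps sum.distrib sum_distrib_left)

lemma cinner_lin_right: "cinner n x (\<lambda>i. u i + c * w i) = cinner n x u + c * cinner n x w"
  unfolding cinner_def by (simp add: algebra_simps sum.distrib sum_distrib_left)

lemma qform_expand:
  assumes "hermitian n H"
  shows "qform n H (\<lambda>i. u i + c * w i)
    = qform n H u + 2 * Re (c * cinner n u (cmatvec n H w)) + (cmod c)\<^sup>2 * qform n H w"
proof -
  have e: "cinner n w (cmatvec n H u) = cnj (cinner n u (cmatvec n H w))"
    using hermitian_cinner[OF assms, of w u] cinner_cnj[of n u "cmatvec n H w"] by simp
  have "cinner n (\<lambda>i. u i + c * w i) (cmatvec n H (\<lambda>i. u i + c * w i))
     = cinner n u (cmatvec n H u) + c * cinner n u (cmatvec n H w)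
       + cnj c * cinner n w (cmatvec n H u) + cnj c * c * cinner n w (cmatvec n H w)"
    by (simp add: cmatvec_lin cinner_lin_left cinner_lin_right algebra_simps)
  then have "qform n H (\<lambda>i. u i + c * w i)
    = Re (cinner n u (cmatvec n H u) + c * cinner n u (cmatvec n H w)
       + cnj c * cnj (cinner n u (cmatvec n H w)) + cnj c * c * cinner n w (cmatvec n H w))"
    by (simp add: qform_def e)
  also have "\<dots> = qform n H u + 2 * Re (c * cinner n u (cmatvec n H w)) + (cmod c)\<^sup>2 * qform n H w"
    by (simp add: qform_def complex_norm_square[symmetric] mult.commute[of "cnj c"])
  finally show ?thesis .
qed

lemma real_quadratic_nonneg_le:
  fixes a b c :: real
  assumes nonneg: "\<And>s. 0 \<le> a - 2 * s * b + s\<^sup>2 * b * c" and a: "0 \<le> a" and c: "0 \<le> c"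
  shows "b \<le> a * c"
proof (cases "c = 0")
  case True
  show ?thesis
  proof (rule ccontr)
    assume "\<not> b \<le> a * c"
    with True have b: "0 < b" by simp
    have "0 \<le> a - 2 * ((a + 1) / b) * b" using nonneg[of "(a + 1) / b"] True by simp
    also have "\<dots> = - a - 2" using b by (simp add: field_simps)
    finally show False using a by simp
  qed
next
  case False
  with c have c: "0 < c" by simp
  have "0 \<le> a - 2 * (1 / c) * b + (1 / c)\<^sup>2 * b * c" by (rule nonneg)
  also have "\<dots> = (a * c - b) / c" using c by (simp add: field_simps power2_eq_square)
  finally show ?thesis using c by (simp add: zero_le_divide_iff)
qed

lemma cauchy_schwarz_qform:
  assumes h: "hermitian n H" and psd: "\<And>v. 0 \<le> qform n H v"
  shows "(cmod (cinner n u (cmatvec n H w)))\<^sup>2 \<le> qform n H u * qform n H w"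
proof -
  define z where "z = cinner n u (cmatvec n H w)"
  have key: "0 \<le> qform n H u - 2 * s * (cmod z)\<^sup>2 + s\<^sup>2 * (cmod z)\<^sup>2 * qform n H w" for s :: real
  proof -
    have "0 \<le> qform n H (\<lambda>i. u i + (- (complex_of_real s * cnj z)) * w i)" by (rule psd)
    also have "\<dots> = qform n H u + 2 * Re (- (complex_of_real s * cnj z) * z)
        + (cmod (complex_of_real s * cnj z))\<^sup>2 * qform n H w"
      using qform_expand[OF h, of u "- (complex_of_real s * cnj z)" w] unfolding z_def by simp
    also have "\<dots> = qform n H u - 2 * s * (cmod z)\<^sup>2 + s\<^sup>2 * (cmod z)\<^sup>2 * qform n H w"
    proof -
      have "Re (- (complex_of_real s * cnj z) * z) = - s * (cmod z)\<^sup>2"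
        by (simp add: cmod_power2 algebra_simps power2_eq_square[of "Re z"] power2_eq_square[of "Im z"])
      moreover have "(cmod (complex_of_real s * cnj z))\<^sup>2 = s\<^sup>2 * (cmod z)\<^sup>2"
        by (simp add: norm_mult power_mult_distrib)
      ultimately show ?thesis by simp
    qed
    finally show ?thesis .
  qed
  then show ?thesis unfolding z_def[symmetric] by (rule real_quadratic_nonneg_le[OF _ psd psd])
qed

lemma frob2_nonneg: "0 \<le> frob2 n A" unfolding frob2_def by (intro sum_nonneg) auto

lemma cnorm2_cmatvec_le: "cnorm2 n (cmatvec n A v) \<le> frob2 n A * cnorm2 n v"
proof -
  have "(cmod (cmatvec n A v i))\<^sup>2 \<le> (\<Sum>j<n. (cmod (A i j))\<^sup>2) * cnorm2 n v" for i
  proof -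
    have "cmatvec n A v i = cinner n (\<lambda>j. cnj (A i j)) v" by (simp add: cmatvec_def cinner_def)
    then have "(cmod (cmatvec n A v i))\<^sup>2 \<le> cnorm2 n (\<lambda>j. cnj (A i j)) * cnorm2 n v" using cmod_cinner_sq by metis
    then show ?thesis by (simp add: cnorm2_def)
  qed
  then have "cnorm2 n (cmatvec n A v) \<le> (\<Sum>i<n. (\<Sum>j<n. (cmod (A i j))\<^sup>2) * cnorm2 n v)"
    unfolding cnorm2_def[of n "cmatvec n A v"] by (intro sum_mono) auto
  also have "\<dots> = frob2 n A * cnorm2 n v" by (simp add: frob2_def sum_distrib_right)
  finally show ?thesis .
qed

lemma cmod_cinner_cmatvec_le: "cmod (cinner n v (cmatvec n A v)) \<le> sqrt (frob2 n A) * cnorm2 n v"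
proof -
  have "cmod (cinner n v (cmatvec n A v)) \<le> sqrt (cnorm2 n v) * sqrt (cnorm2 n (cmatvec n A v))"
    by (rule cmod_cinner_le)
  also have "\<dots> \<le> sqrt (cnorm2 n v) * sqrt (frob2 n A * cnorm2 n v)"
    by (intro mult_left_mono real_sqrt_le_mono cnorm2_cmatvec_le) (simp add: cnorm2_nonneg)
  also have "\<dots> = sqrt (frob2 n A) * cnorm2 n v"
    using cnorm2_nonneg[of n v] by (simp add: real_sqrt_mult)
  finally show ?thesis .
qed

lemma qform_upper: "qform n A v \<le> sqrt (frob2 n A) * cnorm2 n v"
  unfolding qform_def using cmod_cinner_cmatvec_le[of n v A] abs_Re_le_cmod[of "cinner n v (cmatvec n A v)"]
  by linarith

lemma qform_lower: "- (sqrt (frob2 n A) * cnorm2 n v) \<le> qform n A v"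
  unfolding qform_def using cmod_cinner_cmatvec_le[of n v A] abs_Re_le_cmod[of "cinner n v (cmatvec n A v)"]
  by linarith

lemma cnorm2_cmatvec_le_of_qform:
  assumes h: "hermitian n H" and psd: "\<And>v. 0 \<le> qform n H v" and up: "\<And>v. qform n H v \<le> q * cnorm2 n v"
  shows "cnorm2 n (cmatvec n H v) \<le> q\<^sup>2 * cnorm2 n v"
proof -
  let ?w = "cmatvec n H v"
  have q0: "0 \<le> q" if "cnorm2 n ?w > 0"
  proof (rule ccontr)
    assume "\<not> 0 \<le> q"
    then have "q * cnorm2 n ?w < 0" using that by (simp add: mult_neg_pos)
    then show False using psd[of ?w] up[of ?w] by linarith
  qed
  have "(cmod (cinner n ?w (cmatvec n H v)))\<^sup>2 \<le> qform n H ?w * qform n H v"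
    by (rule cauchy_schwarz_qform[OF h psd])
  moreover have "cmod (cinner n ?w (cmatvec n H v)) = cnorm2 n ?w" by (simp add: cinner_self cnorm2_nonneg)
  ultimately have 1: "(cnorm2 n ?w)\<^sup>2 \<le> qform n H ?w * qform n H v" by simp
  show ?thesis
  proof (cases "cnorm2 n ?w > 0")
    case True
    have "qform n H ?w * qform n H v \<le> (q * cnorm2 n ?w) * (q * cnorm2 n v)"
      by (intro mult_mono up psd) (use True q0 cnorm2_nonneg in auto)
    with 1 have "cnorm2 n ?w * cnorm2 n ?w \<le> cnorm2 n ?w * (q\<^sup>2 * cnorm2 n v)"
      by (simp add: power2_eq_square algebra_simps)
    with True show ?thesis by simp
  next
    case False
    then show ?thesis using cnorm2_nonneg[of n ?w] cnorm2_nonneg[of n v] by (simp add: not_less)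
  qed
qed

lemma cadj_cmmul: "cadj (cmmul n A B) = cmmul n (cadj B) (cadj A)"
  by (auto simp: fun_eq_iff cadj_def cmmul_def cnj_sum mult.commute)

lemma mat_on_cadj: "mat_on n A \<Longrightarrow> mat_on n (cadj A)"
  unfolding mat_on_def cadj_def by (metis complex_cnj_zero)

lemma hermitian_cadj: "mat_on n A \<Longrightarrow> hermitian n A \<Longrightarrow> cadj A = A"
  unfolding fun_eq_iff cadj_def
  by (metis (no_types, lifting) complex_cnj_cnj complex_cnj_zero hermitianD mat_on_def)

lemma cadj_hermitian: "cadj A = A \<Longrightarrow> hermitian n A"
  unfolding hermitian_def cadj_def fun_eq_iff by (metis complex_cnj_cnj)

lemma cadj_cid: "cadj (cid n) = cid n" by (simp add: fun_eq_iff cadj_def cid_in)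

lemma msa_cnj_iff: "A \<in> msa cnj n \<longleftrightarrow> mat_on n A \<and> hermitian n A"
  by (simp add: msa_def hermitian_def)

lemma pos_inv_iff: "pos_inv n Y \<longleftrightarrow> mat_on n Y \<and> hermitian n Y \<and> (\<forall>v. 0 \<le> qform n Y v)
    \<and> (\<exists>Z. mat_on n Z \<and> cmmul n Y Z = cid n \<and> cmmul n Z Y = cid n)"
proof -
  have "(\<Sum>i<n. \<Sum>j<n. cnj (v i) * Y i j * v j) = cinner n v (cmatvec n Y v)" for v
    by (simp add: cinner_def cmatvec_def sum_distrib_left mult.assoc)
  then show ?thesis by (simp add: pos_inv_def msa_cnj_iff qform_def)
qed

lemma inv_hermitian:
  assumes "mat_on n Y" "hermitian n Y" "mat_on n Z" "cmmul n Y Z = cid n" "cmmul n Z Y = cid n"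
  shows "hermitian n Z"
proof -
  have "cmmul n (cadj Z) Y = cid n"
    using cadj_cmmul[of n Y Z] assms hermitian_cadj[of n Y] by (simp add: cadj_cid)
  have "cadj Z = cmmul n (cadj Z) (cmmul n Y Z)"
    using assms by (simp add: cmmul_cid_right mat_on_cadj)
  also have "\<dots> = cmmul n (cmmul n (cadj Z) Y) Z" by (simp add: cmmul_assoc)
  also have "\<dots> = Z" using assms \<open>cmmul n (cadj Z) Y = cid n\<close> by (simp add: cmmul_cid_left)
  finally show ?thesis by (rule cadj_hermitian)
qed

lemma mat_on_cscale[simp]: "mat_on n A \<Longrightarrow> mat_on n (cscale c A)"
  by (simp add: mat_on_def cscale_def)

lemma cscale_one[simp]: "cscale 1 A = A"
  by (simp add: cscale_def)

lemma cmmul_cscale: "cmmul n (cscale a A) (cscale b B) = cscale (a * b) (cmmul n A B)"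
  by (auto simp: fun_eq_iff cmmul_def cscale_def sum_distrib_left mult_ac)

lemma cmmul_cscale_left: "cmmul n (cscale a A) B = cscale a (cmmul n A B)"
  by (auto simp: fun_eq_iff cmmul_def cscale_def sum_distrib_left mult_ac)

lemma cmmul_cscale_right: "cmmul n A (cscale a B) = cscale a (cmmul n A B)"
  by (auto simp: fun_eq_iff cmmul_def cscale_def sum_distrib_left mult_ac)

lemma hermitian_cscale: assumes "hermitian n A" shows "hermitian n (cscale (complex_of_real c) A)"
  unfolding hermitian_def cscale_def
  by (intro allI impI) (metis hermitianD[OF assms] complex_cnj_complex_of_real complex_cnj_mult)

lemma hermitian_add_scaled:
  assumes "hermitian n A" "hermitian n B"
  shows "hermitian n (\<lambda>i j. A i j + complex_of_real c * B i j)"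
proof (unfold hermitian_def, intro allI impI)
  fix i j assume "i < n" "j < n"
  then show "A i j + complex_of_real c * B i j = cnj (A j i + complex_of_real c * B j i)"
    using hermitianD[OF assms(1), of i j] hermitianD[OF assms(2), of i j] by simp
qed

lemma cnorm2_cmatvec_cscale: "cnorm2 n (cmatvec n (cscale c A) v) = (cmod c)\<^sup>2 * cnorm2 n (cmatvec n A v)"
proof -
  have "cmatvec n (cscale c A) v = (\<lambda>i. c * cmatvec n A v i)"
    by (simp add: cmatvec_def cscale_def sum_distrib_left mult.assoc)
  then show ?thesis by (simp add: cnorm2_def sum_distrib_left norm_mult power_mult_distrib)
qed

lemma cmatvec_madd: "cmatvec n (\<lambda>i j. A i j + c * B i j) v = (\<lambda>i. cmatvec n A v i + c * cmatvec n B v i)"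
  unfolding cmatvec_def by (simp add: algebra_simps sum.distrib sum_distrib_left)

lemma cmmul_lin_right: "cmmul n A (\<lambda>i j. B i j + c * C i j) = (\<lambda>i j. cmmul n A B i j + c * cmmul n A C i j)"
  by (auto simp: fun_eq_iff cmmul_def algebra_simps sum.distrib sum_distrib_left)

lemma cmmul_lin_left: "cmmul n (\<lambda>i j. B i j + c * C i j) A = (\<lambda>i j. cmmul n B A i j + c * cmmul n C A i j)"
  by (auto simp: fun_eq_iff cmmul_def algebra_simps sum.distrib sum_distrib_left)

lemma qform_cid: "qform n (cid n) v = cnorm2 n v"
proof -
  have "cinner n v (cmatvec n (cid n) v) = cinner n v v" by (rule cinner_cong) (simp_all add: cmatvec_cid)
  then show ?thesis by (simp add: qform_def cinner_self)
qed

lemma qform_lin: "qform n (\<lambda>i j. A i j + complex_of_real c * B i j) v = qform n A v + c * qform n B v"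
  unfolding qform_def cmatvec_madd cinner_lin_right by simp

lemma qform_cscale: "qform n (cscale (complex_of_real c) A) v = c * qform n A v"
proof -
  have "cmatvec n (cscale (complex_of_real c) A) v = (\<lambda>i. complex_of_real c * cmatvec n A v i)"
    by (simp add: cmatvec_def cscale_def sum_distrib_left mult.assoc)
  then show ?thesis by (simp add: qform_def cinner_def sum_distrib_left mult_ac)
qed

lemma qform_square: assumes "hermitian n T" shows "qform n (cmmul n T T) v = cnorm2 n (cmatvec n T v)"
proof -
  have "cinner n v (cmatvec n (cmmul n T T) v) = cinner n v (cmatvec n T (cmatvec n T v))"
    by (rule cinner_cong) (simp_all add: cmatvec_cmmul)
  also have "\<dots> = cinner n (cmatvec n T v) (cmatvec n T v)" by (rule hermitian_cinner[OF assms])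
  finally show ?thesis by (simp add: qform_def cinner_self)
qed

lemma cmatvec_inverse: "cmmul n A B = cid n \<Longrightarrow> i < n \<Longrightarrow> cmatvec n A (cmatvec n B v) i = v i"
  by (metis cmatvec_cid cmatvec_cmmul)

lemma cnorm2_eq_0D: "cnorm2 n v = 0 \<Longrightarrow> i < n \<Longrightarrow> v i = 0"
  unfolding cnorm2_def by (subst (asm) sum_nonneg_eq_0_iff) auto

lemma hermitian_cid: "hermitian n (cid n)" by (simp add: hermitian_def cid_in)

lemma hermitian_cmmul_comm:
  assumes "hermitian n A" "hermitian n B" "cmmul n A B = cmmul n B A"
  shows "hermitian n (cmmul n A B)"
  unfolding hermitian_def
proof (intro allI impI)
  fix i j assume i: "i < n" and j: "j < n"
  have "cnj (cmmul n A B j i) = (\<Sum>p<n. cnj (A j p) * cnj (B p i))"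
    by (simp add: cmmul_in i j cnj_sum)
  also have "\<dots> = (\<Sum>p<n. B i p * A p j)"
    by (intro sum.cong refl) (metis assms(1,2) hermitianD i j lessThan_iff mult.commute)
  also have "\<dots> = cmmul n B A i j" by (simp add: cmmul_in i j)
  finally show "cmmul n A B i j = cnj (cmmul n A B j i)" using assms(3) by simp
qed

lemma hermitian_mneg: assumes "hermitian n H" shows "hermitian n (mneg H)"
  unfolding hermitian_def mneg_def by (intro allI impI) (metis hermitianD[OF assms] complex_cnj_minus)

lemma cmmul_mneg_right: "cmmul n C (mneg H) = mneg (cmmul n C H)"
  by (auto simp: fun_eq_iff cmmul_def mneg_def sum_negf)

lemma cmmul_mneg_left: "cmmul n (mneg H) C = mneg (cmmul n H C)"
  by (auto simp: fun_eq_iff cmmul_def mneg_def sum_negf)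

lemma cnorm2_cmatvec_mneg: "cnorm2 n (cmatvec n (mneg H) v) = cnorm2 n (cmatvec n H v)"
  unfolding cnorm2_def cmatvec_def mneg_def by (simp add: sum_negf)

section \<open>Binomial series of a contraction\<close>

fun cmpow :: "nat \<Rightarrow> (nat \<Rightarrow> nat \<Rightarrow> complex) \<Rightarrow> nat \<Rightarrow> nat \<Rightarrow> nat \<Rightarrow> complex" where
  "cmpow n H 0 = cid n"
| "cmpow n H (Suc k) = cmmul n H (cmpow n H k)"

lemma mat_on_cmpow[simp]: "mat_on n (cmpow n H k)"
  by (cases k) simp_all

lemma cmpow_add: "cmmul n (cmpow n H k) (cmpow n H l) = cmpow n H (k + l)"
  by (induction k) (simp_all add: cmmul_cid_left cmmul_assoc)

lemma cmpow_comm: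
  assumes "mat_on n C" "cmmul n C H = cmmul n H C"
  shows "cmmul n C (cmpow n H k) = cmmul n (cmpow n H k) C"
proof (induction k)
  case 0 then show ?case using assms by (simp add: cmmul_cid_left cmmul_cid_right)
next
  case (Suc k)
  have "cmmul n C (cmpow n H (Suc k)) = cmmul n (cmmul n C H) (cmpow n H k)" by (simp add: cmmul_assoc)
  also have "\<dots> = cmmul n H (cmmul n C (cmpow n H k))" using assms by (simp add: cmmul_assoc)
  also have "\<dots> = cmmul n (cmpow n H (Suc k)) C" using Suc by (simp add: cmmul_assoc)
  finally show ?case .
qed

lemma hermitian_cmpow: "hermitian n P \<Longrightarrow> mat_on n P \<Longrightarrow> hermitian n (cmpow n P k)"
proof (induction k)
  case 0 then show ?case by (simp add: hermitian_cid)
next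
  case (Suc k)
  then show ?case using cmpow_comm[of n P P k] by (simp add: hermitian_cmmul_comm)
qed

lemma cnorm2_cmatvec_cmpow_le:
  assumes b: "\<And>v. cnorm2 n (cmatvec n H v) \<le> q\<^sup>2 * cnorm2 n v"
  shows "cnorm2 n (cmatvec n (cmpow n H k) v) \<le> (q\<^sup>2)^k * cnorm2 n v"
proof (induction k)
  case 0 then show ?case by (simp add: cmatvec_cid cong: cnorm2_cong)
next
  case (Suc k)
  have "cnorm2 n (cmatvec n (cmpow n H (Suc k)) v) = cnorm2 n (cmatvec n H (cmatvec n (cmpow n H k) v))"
    by (rule cnorm2_cong) (simp add: cmatvec_cmmul)
  also have "\<dots> \<le> q\<^sup>2 * cnorm2 n (cmatvec n (cmpow n H k) v)" by (rule b)
  also have "\<dots> \<le> q\<^sup>2 * ((q\<^sup>2)^k * cnorm2 n v)" by (intro mult_left_mono Suc) simp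
  finally show ?case by simp
qed

lemma cmod_le_cnorm2: "i < n \<Longrightarrow> (cmod (v i))\<^sup>2 \<le> cnorm2 n v"
  unfolding cnorm2_def by (rule member_le_sum) auto

lemma cmod_cmpow_le:
  assumes b: "\<And>v. cnorm2 n (cmatvec n H v) \<le> q\<^sup>2 * cnorm2 n v" and q: "0 \<le> q" and i: "i < n" and j: "j < n"
  shows "cmod (cmpow n H k i j) \<le> q ^ k"
proof -
  define e where "e = (\<lambda>p::nat. if p = j then (1::complex) else 0)"
  have "cmatvec n (cmpow n H k) e i = (\<Sum>p<n. if p = j then cmpow n H k i p else 0)"
    unfolding cmatvec_def e_def by (rule sum.cong) auto
  then have eq: "cmpow n H k i j = cmatvec n (cmpow n H k) e i" using j by simp
  have "cnorm2 n e = (\<Sum>p<n. if p = j then 1 else 0)"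
    unfolding cnorm2_def e_def by (rule sum.cong) auto
  then have e1: "cnorm2 n e = 1" using j by simp
  have "(cmod (cmpow n H k i j))\<^sup>2 = (cmod (cmatvec n (cmpow n H k) e i))\<^sup>2" by (simp only: eq)
  also have "\<dots> \<le> cnorm2 n (cmatvec n (cmpow n H k) e)" by (rule cmod_le_cnorm2[OF i])
  also have "\<dots> \<le> (q\<^sup>2)^k * cnorm2 n e" by (rule cnorm2_cmatvec_cmpow_le[OF b])
  also have "\<dots> = (q ^ k)\<^sup>2" by (simp only: e1 mult_1_right power2_eq_square power_mult_distrib)
  finally have "(cmod (cmpow n H k i j))\<^sup>2 \<le> (q ^ k)\<^sup>2" .
  then show ?thesis by (rule power2_le_imp_le[OF _ zero_le_power[OF q]])
qed

lemma gchoose_abs_summable: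
  fixes r q :: real
  assumes "0 \<le> q" "q < 1"
  shows "summable (\<lambda>k. \<bar>r gchoose k\<bar> * q ^ k)"
proof -
  have "ereal (norm q) < conv_radius (\<lambda>k. r gchoose k)"
    using assms by (simp add: conv_radius_gchoose)
  from abs_summable_in_conv_radius[OF this] show ?thesis
    using assms by (simp add: abs_mult power_abs)
qed

definition contraction :: "nat \<Rightarrow> (nat \<Rightarrow> nat \<Rightarrow> complex) \<Rightarrow> real \<Rightarrow> bool" where
  "contraction n H q \<longleftrightarrow> 0 \<le> q \<and> q < 1 \<and> (\<forall>v. cnorm2 n (cmatvec n H v) \<le> q\<^sup>2 * cnorm2 n v)"

text \<open>\<open>binom_series n r H\<close> is \<open>(I - H)\<^sup>r\<close>, which converges when \<open>H\<close> is a contraction.\<close>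

definition binom_series :: "nat \<Rightarrow> real \<Rightarrow> (nat \<Rightarrow> nat \<Rightarrow> complex) \<Rightarrow> nat \<Rightarrow> nat \<Rightarrow> complex" where
  "binom_series n r H = (\<lambda>i j. if i < n \<and> j < n
      then (\<Sum>k. complex_of_real (r gchoose k) * cmpow n (mneg H) k i j) else 0)"

lemma mat_on_binom_series[simp]: "mat_on n (binom_series n r H)"
  unfolding mat_on_def binom_series_def by auto

lemma binom_term_summable_norm:
  assumes "contraction n H q" "i < n" "j < n"
  shows "summable (\<lambda>k. norm (complex_of_real (r gchoose k) * cmpow n (mneg H) k i j))"
proof (rule summable_comparison_test[OF _ gchoose_abs_summable[of q r]])
  have b: "\<And>v. cnorm2 n (cmatvec n (mneg H) v) \<le> q\<^sup>2 * cnorm2 n v"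
    using assms(1) by (simp add: contraction_def cnorm2_cmatvec_mneg)
  show "\<exists>N. \<forall>k\<ge>N. norm (norm (complex_of_real (r gchoose k) * cmpow n (mneg H) k i j))
    \<le> \<bar>r gchoose k\<bar> * q ^ k"
    using cmod_cmpow_le[OF b _ assms(2,3)] assms(1)
    by (auto simp: norm_mult contraction_def intro!: mult_left_mono)
qed (use assms in \<open>auto simp: contraction_def\<close>)

lemma binom_term_summable:
  assumes "contraction n H q" "i < n" "j < n"
  shows "summable (\<lambda>k. complex_of_real (r gchoose k) * cmpow n (mneg H) k i j)"
  using summable_norm_cancel[OF binom_term_summable_norm[OF assms]] .

lemma binom_series_in:
  "i < n \<Longrightarrow> j < n \<Longrightarrow> binom_series n r H i j = (\<Sum>k. complex_of_real (r gchoose k) * cmpow n (mneg H) k i j)"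
  by (simp add: binom_series_def)

lemma cmpow_binom_convolution:
  assumes i: "i < n" and j: "j < n"
  shows "(\<Sum>p<n. \<Sum>k\<le>m. complex_of_real (r gchoose k) * cmpow n H k i p
      * (complex_of_real (s gchoose (m - k)) * cmpow n H (m - k) p j))
    = complex_of_real ((r + s) gchoose m) * cmpow n H m i j"
proof -
  have "(\<Sum>p<n. \<Sum>k\<le>m. complex_of_real (r gchoose k) * cmpow n H k i p
      * (complex_of_real (s gchoose (m - k)) * cmpow n H (m - k) p j))
    = (\<Sum>k\<le>m. complex_of_real (r gchoose k) * complex_of_real (s gchoose (m - k))
      * (\<Sum>p<n. cmpow n H k i p * cmpow n H (m - k) p j))"
    by (subst sum.swap) (simp add: sum_distrib_left mult_ac)
  also have "\<dots> = (\<Sum>k\<le>m. complex_of_real (r gchoose k) * complex_of_real (s gchoose (m - k))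
      * cmpow n H m i j)"
  proof (intro sum.cong refl arg_cong2[where f = "(*)"])
    fix k assume "k \<in> {..m}"
    then show "(\<Sum>p<n. cmpow n H k i p * cmpow n H (m - k) p j) = cmpow n H m i j"
      using cmpow_add[of n H k "m - k"] cmmul_in[OF i j, of "cmpow n H k" "cmpow n H (m - k)"] by simp
  qed
  also have "\<dots> = complex_of_real (\<Sum>k\<le>m. (r gchoose k) * (s gchoose (m - k))) * cmpow n H m i j"
    by (simp add: sum_distrib_right)
  also have "(\<Sum>k\<le>m. (r gchoose k) * (s gchoose (m - k))) = (r + s) gchoose m"
    using gbinomial_Vandermonde[of r s m] by (simp add: atLeast0AtMost)
  finally show ?thesis .
qed

lemma binom_series_mult:
  assumes b: "contraction n H q"
  shows "cmmul n (binom_series n r H) (binom_series n s H) = binom_series n (r + s) H"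
proof (intro ext)
  fix i j
  show "cmmul n (binom_series n r H) (binom_series n s H) i j = binom_series n (r + s) H i j"
  proof (cases "i < n \<and> j < n")
    case False
    have "binom_series n (r + s) H i j = 0" unfolding binom_series_def using False by auto
    then show ?thesis using cmmul_out[OF False] by simp
  next
    case True
    then have i: "i < n" and j: "j < n" by auto
    let ?P = "cmpow n (mneg H)"
    define a where "a = (\<lambda>p k. complex_of_real (r gchoose k) * ?P k i p)"
    define c where "c = (\<lambda>p k. complex_of_real (s gchoose k) * ?P k p j)"
    have "cmmul n (binom_series n r H) (binom_series n s H) i j = (\<Sum>p<n. (\<Sum>k. a p k) * (\<Sum>k. c p k))"
      unfolding cmmul_in[OF i j] a_def c_def by (intro sum.cong refl) (simp add: binom_series_in i j)
    also have "\<dots> = (\<Sum>p<n. \<Sum>m. \<Sum>k\<le>m. a p k * c p (m - k))"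
    proof (intro sum.cong refl Cauchy_product)
      fix p assume "p \<in> {..<n}"
      then show "summable (\<lambda>k. norm (a p k))" "summable (\<lambda>k. norm (c p k))"
        unfolding a_def c_def using binom_term_summable_norm[OF b] i j by auto
    qed
    also have "\<dots> = (\<Sum>m. \<Sum>p<n. \<Sum>k\<le>m. a p k * c p (m - k))"
    proof (rule suminf_sum[symmetric])
      fix p assume "p \<in> {..<n}"
      then show "summable (\<lambda>m. \<Sum>k\<le>m. a p k * c p (m - k))"
        unfolding a_def c_def using binom_term_summable_norm[OF b] i j by (intro summable_Cauchy_product) auto
    qed
    also have "\<dots> = (\<Sum>m. complex_of_real ((r + s) gchoose m) * ?P m i j)"
      unfolding a_def c_def by (simp add: cmpow_binom_convolution[OF i j])
    also have "\<dots> = binom_series n (r + s) H i j" by (simp add: binom_series_in i j)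
    finally show ?thesis .
  qed
qed

lemma suminf_eq_first_term:
  fixes f :: "nat \<Rightarrow> 'a::{t2_space, comm_monoid_add}"
  shows "(\<And>k. k > 0 \<Longrightarrow> f k = 0) \<Longrightarrow> suminf f = f 0"
  using suminf_finite[of "{0}" f] by auto

lemma binom_series_0: "binom_series n 0 H = cid n"
proof (intro ext)
  fix i j
  show "binom_series n 0 H i j = cid n i j"
  proof (cases "i < n \<and> j < n")
    case True
    have "binom_series n 0 H i j = complex_of_real (0 gchoose 0) * cmpow n (mneg H) 0 i j"
      unfolding binom_series_in[OF True[THEN conjunct1] True[THEN conjunct2]]
      by (rule suminf_eq_first_term) (simp add: gbinomial_0_left)
    then show ?thesis by simp
  next
    case False
    have "binom_series n 0 H i j = 0" unfolding binom_series_def using False by auto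
    moreover have "cid n i j = 0" using False by (auto simp: cid_in)
    ultimately show ?thesis by simp
  qed
qed

lemma gbinomial_1_eq_0: "k \<ge> 2 \<Longrightarrow> ((1::real) gchoose k) = 0"
proof -
  assume "k \<ge> 2"
  have "((1::real) gchoose k) = of_nat (1 choose k)"
    using binomial_gbinomial[of 1 k, where 'a=real] by simp
  also have "(1 choose k) = 0" using \<open>k \<ge> 2\<close> by (simp add: binomial_eq_0)
  finally show ?thesis by simp
qed

lemma binom_series_1: "mat_on n H \<Longrightarrow> binom_series n 1 H = (\<lambda>i j. cid n i j - H i j)"
proof (intro ext)
  fix i j assume H: "mat_on n H"
  show "binom_series n 1 H i j = cid n i j - H i j"
  proof (cases "i < n \<and> j < n")
    case True
    have "binom_series n 1 H i j = (\<Sum>k\<in>{0,1}. complex_of_real (1 gchoose k) * cmpow n (mneg H) k i j)"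
      unfolding binom_series_in[OF True[THEN conjunct1] True[THEN conjunct2]]
    proof (rule suminf_finite)
      fix k :: nat assume "k \<notin> {0, 1}"
      then have "k \<ge> 2" by auto
      then show "complex_of_real (1 gchoose k) * cmpow n (mneg H) k i j = 0" by (simp add: gbinomial_1_eq_0)
    qed simp
    also have "\<dots> = cid n i j + mneg H i j"
      using H by (simp add: cmmul_cid_right)
    finally show ?thesis by (simp add: mneg_def)
  next
    case False
    have "binom_series n 1 H i j = 0" unfolding binom_series_def using False by auto
    moreover have "cid n i j = 0" using False by (auto simp: cid_in)
    moreover have "H i j = 0" using False H by (auto simp: mat_on_def)
    ultimately show ?thesis by simp
  qed
qed

lemma suminf_cnj: "summable f \<Longrightarrow> cnj (suminf f) = (\<Sum>k. cnj (f k))"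
  by (metis sums_cnj summable_sums sums_unique)

lemma binom_series_hermitian:
  assumes b: "contraction n H q" and h: "hermitian n H" and m: "mat_on n H"
  shows "hermitian n (binom_series n r H)"
  unfolding hermitian_def
proof (intro allI impI)
  fix i j assume i: "i < n" and j: "j < n"
  have hp: "hermitian n (cmpow n (mneg H) k)" for k
    by (rule hermitian_cmpow) (simp_all add: hermitian_mneg h m)
  have "cnj (binom_series n r H j i) = (\<Sum>k. cnj (complex_of_real (r gchoose k) * cmpow n (mneg H) k j i))"
    by (simp add: binom_series_in i j suminf_cnj[OF binom_term_summable[OF b j i]])
  also have "\<dots> = (\<Sum>k. complex_of_real (r gchoose k) * cmpow n (mneg H) k i j)"
    by (intro suminf_cong)
      (metis complex_cnj_cnj complex_cnj_complex_of_real complex_cnj_mult hermitianD hp i j)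
  finally show "binom_series n r H i j = cnj (binom_series n r H j i)" by (simp add: binom_series_in i j)
qed

lemma binom_series_comm:
  assumes b: "contraction n H q" and m: "mat_on n H" and c: "mat_on n C" and cm: "cmmul n C H = cmmul n H C"
  shows "cmmul n C (binom_series n r H) = cmmul n (binom_series n r H) C"
proof (intro ext)
  fix i j
  show "cmmul n C (binom_series n r H) i j = cmmul n (binom_series n r H) C i j"
  proof (cases "i < n \<and> j < n")
    case False then show ?thesis using cmmul_out[OF False] by simp
  next
    case True
    then have i: "i < n" and j: "j < n" by auto
    let ?P = "cmpow n (mneg H)"
    let ?a = "\<lambda>k. complex_of_real (r gchoose k)"
    have cP: "cmmul n C (?P k) = cmmul n (?P k) C" for k
      by (rule cmpow_comm[OF c]) (simp add: cmmul_mneg_right cmmul_mneg_left cm)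
    have "cmmul n C (binom_series n r H) i j = (\<Sum>p<n. C i p * (\<Sum>k. ?a k * ?P k p j))"
      unfolding cmmul_in[OF i j] by (intro sum.cong refl) (simp add: binom_series_in j)
    also have "\<dots> = (\<Sum>p<n. \<Sum>k. C i p * (?a k * ?P k p j))"
      by (intro sum.cong refl suminf_mult[symmetric] binom_term_summable[OF b]) (auto simp: j)
    also have "\<dots> = (\<Sum>k. \<Sum>p<n. C i p * (?a k * ?P k p j))"
      by (intro suminf_sum[symmetric] summable_mult binom_term_summable[OF b]) (auto simp: j)
    also have "\<dots> = (\<Sum>k. ?a k * cmmul n C (?P k) i j)"
      by (intro suminf_cong) (simp add: cmmul_in i j sum_distrib_left mult_ac)
    also have "\<dots> = (\<Sum>k. ?a k * cmmul n (?P k) C i j)" by (simp add: cP)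
    also have "\<dots> = (\<Sum>k. \<Sum>p<n. (?a k * ?P k i p) * C p j)"
      by (intro suminf_cong) (simp add: cmmul_in i j sum_distrib_left mult_ac)
    also have "\<dots> = (\<Sum>p<n. \<Sum>k. (?a k * ?P k i p) * C p j)"
      by (intro suminf_sum summable_mult2 binom_term_summable[OF b]) (auto simp: i)
    also have "\<dots> = (\<Sum>p<n. (\<Sum>k. ?a k * ?P k i p) * C p j)"
      by (intro sum.cong refl suminf_mult2[symmetric] binom_term_summable[OF b]) (auto simp: i)
    also have "\<dots> = cmmul n (binom_series n r H) C i j"
      unfolding cmmul_in[OF i j] by (intro sum.cong refl) (simp add: binom_series_in i)
    finally show ?thesis .
  qed
qed

section \<open>Inverses and inverse square roots of positive definite matrices\<close>

lemma cmmul_left_inverse_unique: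
  assumes "mat_on n M" "mat_on n Z" "cmmul n M Y = cid n" "cmmul n Y Z = cid n"
  shows "M = Z"
proof -
  have "M = cmmul n M (cmmul n Y Z)" using assms(1,4) by (simp add: cmmul_cid_right)
  also have "\<dots> = cmmul n (cmmul n M Y) Z" by (simp add: cmmul_assoc)
  also have "\<dots> = Z" using assms(2,3) by (simp add: cmmul_cid_left)
  finally show ?thesis .
qed

lemma qform_inverse_eq:
  assumes hY: "hermitian n Y" and YZ: "cmmul n Y Z = cid n"
  shows "qform n Z v = qform n Y (cmatvec n Z v)"
proof -
  let ?w = "cmatvec n Z v"
  have "cinner n v (cmatvec n Z v) = cinner n (cmatvec n Y ?w) ?w"
    by (rule cinner_cong) (simp_all add: cmatvec_inverse[OF YZ])
  also have "\<dots> = cinner n ?w (cmatvec n Y ?w)" by (rule hermitian_cinner[OF hY, symmetric])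
  finally show ?thesis by (simp add: qform_def)
qed

lemma qform_inverse_le:
  assumes hY: "hermitian n Y" and YZ: "cmmul n Y Z = cid n" and m: "0 < m"
    and lowY: "\<And>w. m * cnorm2 n w \<le> qform n Y w"
  shows "qform n Z v \<le> cnorm2 n v / m"
proof -
  define w where "w = cmatvec n Z v"
  have nv: "cnorm2 n (cmatvec n Y w) = cnorm2 n v"
    by (rule cnorm2_cong) (simp add: w_def cmatvec_inverse[OF YZ])
  have "cmod (cinner n w (cmatvec n Y w)) \<le> sqrt (cnorm2 n w) * sqrt (cnorm2 n v)"
    using cmod_cinner_le[of n w "cmatvec n Y w"] nv by simp
  then have c: "qform n Y w \<le> sqrt (cnorm2 n w) * sqrt (cnorm2 n v)"
    using abs_Re_le_cmod[of "cinner n w (cmatvec n Y w)"] unfolding qform_def by linarith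
  have sw: "m * sqrt (cnorm2 n w) \<le> sqrt (cnorm2 n v)"
  proof (cases "cnorm2 n w = 0")
    case True then show ?thesis by (simp add: cnorm2_nonneg)
  next
    case False
    then have pos: "0 < sqrt (cnorm2 n w)" using cnorm2_nonneg[of n w] by simp
    have "sqrt (cnorm2 n w) * (m * sqrt (cnorm2 n w)) \<le> sqrt (cnorm2 n w) * sqrt (cnorm2 n v)"
      using lowY[of w] c cnorm2_nonneg[of n w] by (simp add: mult_ac)
    then show ?thesis using pos by simp
  qed
  note c
  also have "sqrt (cnorm2 n w) * sqrt (cnorm2 n v) \<le> (sqrt (cnorm2 n v) / m) * sqrt (cnorm2 n v)"
    using sw m by (intro mult_right_mono) (simp_all add: field_simps cnorm2_nonneg)
  also have "\<dots> = cnorm2 n v / m" using cnorm2_nonneg[of n v] by simp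
  finally show ?thesis by (simp add: w_def qform_inverse_eq[OF hY YZ])
qed

lemma qform_inverse_ge:
  assumes hY: "hermitian n Y" and psdY: "\<And>v. 0 \<le> qform n Y v" and YZ: "cmmul n Y Z = cid n"
  shows "cnorm2 n v \<le> (sqrt (frob2 n Y) + 1) * qform n Z v"
proof -
  define c where "c = sqrt (frob2 n Y) + 1"
  define w where "w = cmatvec n Z v"
  let ?u = "cmatvec n Y w"
  have nv: "cnorm2 n v = cnorm2 n ?u" by (rule cnorm2_cong) (simp add: w_def cmatvec_inverse[OF YZ])
  have "(cmod (cinner n ?u (cmatvec n Y w)))\<^sup>2 \<le> qform n Y ?u * qform n Y w"
    by (rule cauchy_schwarz_qform[OF hY psdY])
  then have 1: "(cnorm2 n ?u)\<^sup>2 \<le> qform n Y ?u * qform n Y w" by (simp add: cinner_self cnorm2_nonneg)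
  have "qform n Y ?u \<le> c * cnorm2 n ?u"
    using qform_upper[of n Y ?u] cnorm2_nonneg[of n ?u] unfolding c_def by (simp add: algebra_simps)
  then have "qform n Y ?u * qform n Y w \<le> (c * cnorm2 n ?u) * qform n Y w" by (intro mult_right_mono psdY)
  with 1 have 2: "cnorm2 n ?u * cnorm2 n ?u \<le> cnorm2 n ?u * (c * qform n Y w)"
    by (simp add: power2_eq_square mult_ac)
  have "cnorm2 n ?u \<le> c * qform n Y w"
  proof (cases "cnorm2 n ?u = 0")
    case True
    then show ?thesis using mult_nonneg_nonneg[of c, OF _ psdY[of w]] by (simp add: c_def frob2_nonneg)
  next
    case False
    then have "0 < cnorm2 n ?u" using cnorm2_nonneg[of n ?u] by simp
    with 2 show ?thesis by simp
  qed
  then show ?thesis by (simp add: nv w_def qform_inverse_eq[OF hY YZ] c_def)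
qed

text \<open>Normalising a positive definite \<open>Z\<close> by an upper bound \<open>c\<close> of its quadratic form makes
  \<open>I - Z/c\<close> a contraction, so that \<open>Z = c (I - (I - Z/c))\<close> has binomial-series powers.\<close>

lemma pos_def_contraction:
  assumes hZ: "hermitian n Z" and m: "0 < m" and low: "\<And>v. m * cnorm2 n v \<le> qform n Z v"
  defines "c \<equiv> sqrt (frob2 n Z) + 1"
  shows "contraction n (\<lambda>i j. cid n i j + complex_of_real (- 1 / c) * Z i j) (1 - min m 1 / c)"
proof -
  define H where "H = (\<lambda>i j. cid n i j + complex_of_real (- 1 / c) * Z i j)"
  define q where "q = 1 - min m 1 / c"
  have c1: "1 \<le> c" by (simp add: c_def frob2_nonneg)
  have q: "0 \<le> q" "q < 1" using c1 m by (simp_all add: q_def field_simps)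
  have hH: "hermitian n H" unfolding H_def by (rule hermitian_add_scaled[OF hermitian_cid hZ])
  have qH: "qform n H v = cnorm2 n v - qform n Z v / c" for v
    unfolding H_def qform_lin qform_cid by simp
  have upper: "qform n Z v \<le> c * cnorm2 n v" for v
    using qform_upper[of n Z v] cnorm2_nonneg[of n v] unfolding c_def by (simp add: algebra_simps)
  have psdH: "0 \<le> qform n H v" for v
    using upper[of v] c1 by (simp add: qH field_simps)
  have "qform n H v \<le> q * cnorm2 n v" for v
  proof -
    have "min m 1 * cnorm2 n v \<le> qform n Z v"
      using low[of v] mult_right_mono[of "min m 1" m "cnorm2 n v"] cnorm2_nonneg[of n v] by linarith
    then show ?thesis using c1 by (simp add: qH q_def field_simps)
  qed
  with q show ?thesis
    unfolding contraction_def H_def[symmetric] q_def[symmetric]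
    using cnorm2_cmatvec_le_of_qform[OF hH psdH] by blast
qed

lemma psd_sqrt_exists:
  assumes mZ: "mat_on n Z" and hZ: "hermitian n Z" and m: "0 < m"
    and low: "\<And>v. m * cnorm2 n v \<le> qform n Z v"
  obtains S where "mat_on n S" "hermitian n S" "\<And>v. 0 \<le> qform n S v" "cmmul n S S = Z"
    "\<And>C. mat_on n C \<Longrightarrow> cmmul n C Z = cmmul n Z C \<Longrightarrow> cmmul n C S = cmmul n S C"
proof -
  define c where "c = sqrt (frob2 n Z) + 1"
  define H where "H = (\<lambda>i j. cid n i j + complex_of_real (- 1 / c) * Z i j)"
  have c1: "1 \<le> c" by (simp add: c_def frob2_nonneg)
  have H: "contraction n H (1 - min m 1 / c)"
    unfolding H_def c_def by (rule pos_def_contraction[OF hZ m low])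
  have mH: "mat_on n H" using mZ by (simp add: H_def mat_on_def cid_in)
  have hH: "hermitian n H" unfolding H_def by (rule hermitian_add_scaled[OF hermitian_cid hZ])
  define F where "F = binom_series n (1/4) H"
  define S where "S = cscale (complex_of_real (sqrt c)) (cmmul n F F)"
  have FF: "cmmul n F F = binom_series n (1/2) H" unfolding F_def by (simp add: binom_series_mult[OF H])
  have hF: "hermitian n F" unfolding F_def by (rule binom_series_hermitian[OF H hH mH])
  show ?thesis
  proof
    show "mat_on n S" by (simp add: S_def)
    show "hermitian n S" unfolding S_def FF by (rule hermitian_cscale[OF binom_series_hermitian[OF H hH mH]])
    show "0 \<le> qform n S v" for v
      unfolding S_def qform_cscale qform_square[OF hF] using c1 cnorm2_nonneg by simp
    have "cmmul n S S = cscale (complex_of_real c) (binom_series n 1 H)"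
      using c1 by (simp add: S_def FF cmmul_cscale binom_series_mult[OF H] flip: of_real_mult)
    also have "\<dots> = Z"
      unfolding binom_series_1[OF mH] using c1 mZ
      by (auto simp: cscale_def H_def fun_eq_iff cid_in mat_on_def)
    finally show "cmmul n S S = Z" .
    fix C assume mC: "mat_on n C" and CZ: "cmmul n C Z = cmmul n Z C"
    have "cmmul n C H = cmmul n H C"
      unfolding H_def cmmul_lin_right cmmul_lin_left CZ using mC by (simp add: cmmul_cid_left cmmul_cid_right)
    then show "cmmul n C S = cmmul n S C"
      unfolding S_def cmmul_cscale_left cmmul_cscale_right FF by (simp add: binom_series_comm[OF H mH mC])
  qed
qed

lemma inv_sqrt_exists:
  assumes "pos_inv n Y"
  shows "\<exists>S. mat_on n S \<and> pos_inv n S \<and> cmmul n (cmmul n S S) Y = cid n"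
proof -
  from assms obtain Z where mY: "mat_on n Y" and hY: "hermitian n Y" and psdY: "\<And>v. 0 \<le> qform n Y v"
    and mZ: "mat_on n Z" and YZ: "cmmul n Y Z = cid n" and ZY: "cmmul n Z Y = cid n"
    unfolding pos_inv_iff by blast
  define c where "c = sqrt (frob2 n Y) + 1"
  have c: "0 < c" by (simp add: c_def frob2_nonneg add_nonneg_pos)
  have "1 / c * cnorm2 n v \<le> qform n Z v" for v
    using qform_inverse_ge[OF hY psdY YZ, of v] c by (simp add: c_def field_simps)
  with c obtain S where mS: "mat_on n S" and hS: "hermitian n S" and psdS: "\<And>v. 0 \<le> qform n S v"
    and SS: "cmmul n S S = Z"
    and comm: "\<And>C. mat_on n C \<Longrightarrow> cmmul n C Z = cmmul n Z C \<Longrightarrow> cmmul n C S = cmmul n S C"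
    using psd_sqrt_exists[OF mZ inv_hermitian[OF mY hY mZ YZ ZY], of "1 / c"] by auto
  have YS: "cmmul n Y S = cmmul n S Y" using comm[OF mY] YZ ZY by simp
  have "cmmul n S (cmmul n S Y) = cid n" by (simp add: cmmul_assoc[symmetric] SS ZY)
  moreover then have "cmmul n (cmmul n S Y) S = cid n" by (simp only: cmmul_assoc YS)
  ultimately have "pos_inv n S" unfolding pos_inv_iff
    using mS hS psdS by (intro conjI allI exI[of _ "cmmul n S Y"]) auto
  with mS SS ZY show ?thesis by auto
qed

lemma cmatvec_eq_0_of_qform_eq_0:
  assumes h: "hermitian n H" and psd: "\<And>v. 0 \<le> qform n H v" and z: "qform n H v = 0" and i: "i < n"
  shows "cmatvec n H v i = 0"
proof -
  let ?u = "cmatvec n H v"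
  have "(cmod (cinner n ?u (cmatvec n H v)))\<^sup>2 \<le> qform n H ?u * qform n H v"
    by (rule cauchy_schwarz_qform[OF h psd])
  then have "cnorm2 n ?u = 0" by (simp add: cinner_self cnorm2_nonneg z)
  then show ?thesis using i by (rule cnorm2_eq_0D)
qed

lemma sum_rotate3:
  fixes f :: "nat \<Rightarrow> nat \<Rightarrow> nat \<Rightarrow> complex"
  shows "(\<Sum>i<n. \<Sum>p<n. \<Sum>q<n. f q i p) = (\<Sum>i<n. \<Sum>p<n. \<Sum>q<n. f i p q)"
proof -
  have "(\<Sum>i<n. \<Sum>p<n. \<Sum>q<n. f q i p) = (\<Sum>i<n. \<Sum>q<n. \<Sum>p<n. f q i p)"
    by (intro sum.cong refl sum.swap)
  also have "\<dots> = (\<Sum>q<n. \<Sum>i<n. \<Sum>p<n. f q i p)" by (rule sum.swap)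
  finally show ?thesis .
qed

text \<open>With \<open>D = S\<^sub>1 - S\<^sub>2\<close>, the sum of both quadratic forms over the columns of \<open>D\<close> is the
  trace \<open>tr (D (S\<^sub>1 D + D S\<^sub>2)) = tr (D (S\<^sub>1\<^sup>2 - S\<^sub>2\<^sup>2))\<close>.\<close>

lemma qform_columns_sum:
  assumes h1: "hermitian n S1" and h2: "hermitian n S2"
  defines "D \<equiv> \<lambda>i j. S1 i j - S2 i j"
  shows "(\<Sum>i<n. qform n S1 (\<lambda>p. D p i) + qform n S2 (\<lambda>p. D p i))
    = Re (\<Sum>i<n. \<Sum>p<n. D i p * (cmmul n S1 S1 p i - cmmul n S2 S2 p i))"
proof -
  have hD: "\<And>i j. i < n \<Longrightarrow> j < n \<Longrightarrow> cnj (D i j) = D j i"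
    unfolding D_def using hermitianD[OF h1] hermitianD[OF h2] by (metis complex_cnj_cnj complex_cnj_diff)
  have col: "cinner n (\<lambda>p. D p i) (cmatvec n S (\<lambda>p. D p i)) = (\<Sum>p<n. \<Sum>q<n. D i p * S p q * D q i)"
    if "i < n" for S i
    unfolding cinner_def cmatvec_def using that
    by (intro sum.cong refl) (simp add: hD sum_distrib_left mult.assoc)
  have "(\<Sum>i<n. \<Sum>p<n. \<Sum>q<n. D i p * S2 p q * D q i) = (\<Sum>i<n. \<Sum>p<n. \<Sum>q<n. D q i * D i p * S2 p q)"
    by (simp add: mult_ac)
  also have "\<dots> = (\<Sum>i<n. \<Sum>p<n. \<Sum>q<n. D i p * D p q * S2 q i)"
    by (rule sum_rotate3[where f = "\<lambda>i p q. D i p * D p q * S2 q i"])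
  finally have rot: "(\<Sum>i<n. \<Sum>p<n. \<Sum>q<n. D i p * S2 p q * D q i)
    = (\<Sum>i<n. \<Sum>p<n. \<Sum>q<n. D i p * D p q * S2 q i)" .
  have "(\<Sum>i<n. cinner n (\<lambda>p. D p i) (cmatvec n S1 (\<lambda>p. D p i))
        + cinner n (\<lambda>p. D p i) (cmatvec n S2 (\<lambda>p. D p i)))
      = (\<Sum>i<n. \<Sum>p<n. \<Sum>q<n. D i p * S1 p q * D q i) + (\<Sum>i<n. \<Sum>p<n. \<Sum>q<n. D i p * S2 p q * D q i)"
    by (simp add: col sum.distrib)
  also have "\<dots> = (\<Sum>i<n. \<Sum>p<n. D i p * ((\<Sum>q<n. S1 p q * D q i) + (\<Sum>q<n. D p q * S2 q i)))"
    unfolding rot by (simp only: distrib_left sum_distrib_left mult.assoc sum.distrib)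
  also have "\<dots> = (\<Sum>i<n. \<Sum>p<n. D i p * (cmmul n S1 S1 p i - cmmul n S2 S2 p i))"
    by (intro sum.cong refl arg_cong2[where f = "(*)"])
      (auto simp: D_def cmmul_in algebra_simps sum_subtractf)
  finally have sum_eq: "(\<Sum>i<n. cinner n (\<lambda>p. D p i) (cmatvec n S1 (\<lambda>p. D p i))
        + cinner n (\<lambda>p. D p i) (cmatvec n S2 (\<lambda>p. D p i)))
      = (\<Sum>i<n. \<Sum>p<n. D i p * (cmmul n S1 S1 p i - cmmul n S2 S2 p i))" .
  have "(\<Sum>i<n. qform n S1 (\<lambda>p. D p i) + qform n S2 (\<lambda>p. D p i))
      = Re (\<Sum>i<n. cinner n (\<lambda>p. D p i) (cmatvec n S1 (\<lambda>p. D p i))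
        + cinner n (\<lambda>p. D p i) (cmatvec n S2 (\<lambda>p. D p i)))"
    by (simp add: qform_def)
  then show ?thesis unfolding sum_eq .
qed

lemma psd_sqrt_unique:
  assumes m1: "mat_on n S1" and h1: "hermitian n S1" and psd1: "\<And>v. 0 \<le> qform n S1 v"
    and W: "cmmul n W S1 = cid n"
    and m2: "mat_on n S2" and h2: "hermitian n S2" and psd2: "\<And>v. 0 \<le> qform n S2 v"
    and sq: "cmmul n S1 S1 = cmmul n S2 S2"
  shows "S1 = S2"
proof -
  define D where "D = (\<lambda>i j. S1 i j - S2 i j)"
  have "(\<Sum>i<n. qform n S1 (\<lambda>p. D p i) + qform n S2 (\<lambda>p. D p i)) = 0"
    using qform_columns_sum[OF h1 h2] by (simp add: D_def sq)
  then have "\<forall>i\<in>{..<n}. qform n S1 (\<lambda>p. D p i) + qform n S2 (\<lambda>p. D p i) = 0"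
    by (subst (asm) sum_nonneg_eq_0_iff) (auto intro: add_nonneg_nonneg psd1 psd2)
  then have z: "qform n S1 (\<lambda>p. D p i) = 0" if "i < n" for i
    using that psd1[of "\<lambda>p. D p i"] psd2[of "\<lambda>p. D p i"] by force
  have "D p i = 0" if "p < n" "i < n" for p i
  proof -
    have "D p i = cmatvec n W (cmatvec n S1 (\<lambda>p. D p i)) p" using cmatvec_inverse[OF W that(1)] by simp
    also have "\<dots> = 0"
      unfolding cmatvec_def[of n W] using cmatvec_eq_0_of_qform_eq_0[OF h1 psd1 z[OF that(2)]]
      by (intro sum.neutral) simp
    finally show ?thesis .
  qed
  then show ?thesis using m1 m2 unfolding mat_on_def D_def by (metis eq_iff_diff_eq_0 ext)
qed

text \<open>Uniqueness is what makes the definite description in \<open>inv_sqrt\<close> meaningful.\<close>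

lemma inv_sqrt_unique:
  assumes "pos_inv n Y"
    and "mat_on n S1" "pos_inv n S1" "cmmul n (cmmul n S1 S1) Y = cid n"
    and "mat_on n S2" "pos_inv n S2" "cmmul n (cmmul n S2 S2) Y = cid n"
  shows "S1 = S2"
proof -
  from assms(1) obtain Z where Z: "mat_on n Z" "cmmul n Y Z = cid n" unfolding pos_inv_iff by blast
  have "cmmul n S1 S1 = Z" "cmmul n S2 S2 = Z"
    by (rule cmmul_left_inverse_unique[OF _ Z(1) assms(4) Z(2)]
        cmmul_left_inverse_unique[OF _ Z(1) assms(7) Z(2)], simp)+
  moreover obtain W where "cmmul n W S1 = cid n" using assms(3) unfolding pos_inv_iff by blast
  ultimately show ?thesis
    using assms(2,3,5,6) psd_sqrt_unique[of n S1 _ S2] unfolding pos_inv_iff by metis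
qed

lemma inv_sqrt_spec:
  assumes "pos_inv n Y"
  shows "mat_on n (inv_sqrt n Y) \<and> pos_inv n (inv_sqrt n Y)
    \<and> cmmul n (cmmul n (inv_sqrt n Y) (inv_sqrt n Y)) Y = cid n"
proof -
  have "\<exists>!S. mat_on n S \<and> pos_inv n S \<and> cmmul n (cmmul n S S) Y = cid n"
    using inv_sqrt_exists[OF assms] inv_sqrt_unique[OF assms] by blast
  then show ?thesis unfolding inv_sqrt_def by (rule theI')
qed

lemma inv_sqrt_facts:
  assumes pY: "pos_inv n Y"
  shows "mat_on n (inv_sqrt n Y)" "hermitian n (inv_sqrt n Y)"
    "cmmul n (inv_sqrt n Y) (cmmul n (inv_sqrt n Y) Y) = cid n"
    "cmmul n (cadj (cmmul n (inv_sqrt n Y) Y)) (cmmul n (inv_sqrt n Y) Y) = Y"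
    "cmmul n Y (cmmul n (inv_sqrt n Y) (inv_sqrt n Y)) = cid n"
proof -
  let ?S = "inv_sqrt n Y"
  have p: "mat_on n ?S" "pos_inv n ?S" "cmmul n (cmmul n ?S ?S) Y = cid n"
    using inv_sqrt_spec[OF pY] by blast+
  from pY obtain Z where mY: "mat_on n Y" and hY: "hermitian n Y" and mZ: "mat_on n Z"
    and YZ: "cmmul n Y Z = cid n"
    unfolding pos_inv_iff by blast
  show "mat_on n ?S" by (rule p(1))
  show hS: "hermitian n ?S" using p(2) unfolding pos_inv_iff by blast
  show "cmmul n ?S (cmmul n ?S Y) = cid n" using p(3) by (simp add: cmmul_assoc)
  have SSZ: "cmmul n ?S ?S = Z" by (rule cmmul_left_inverse_unique[OF _ mZ p(3) YZ]) simp
  show "cmmul n Y (cmmul n ?S ?S) = cid n" by (simp add: SSZ YZ)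
  have "cadj (cmmul n ?S Y) = cmmul n Y ?S"
    by (simp add: cadj_cmmul hermitian_cadj[OF mY hY] hermitian_cadj[OF p(1) hS])
  then have "cmmul n (cadj (cmmul n ?S Y)) (cmmul n ?S Y) = cmmul n Y (cmmul n ?S (cmmul n ?S Y))"
    by (simp add: cmmul_assoc)
  also have "\<dots> = Y" using p(3) mY by (simp add: cmmul_assoc cmmul_cid_right)
  finally show "cmmul n (cadj (cmmul n ?S Y)) (cmmul n ?S Y) = Y" .
qed

lemma pos_inv_shift:
  assumes mX: "mat_on n X" and hX: "hermitian n X" and t: "sqrt (frob2 n X) < t"
  shows "pos_inv n (\<lambda>i j. X i j + complex_of_real t * cid n i j)"
    and "\<And>w. (t - sqrt (frob2 n X)) * cnorm2 n w \<le> qform n (\<lambda>i j. X i j + complex_of_real t * cid n i j) w"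
proof -
  let ?Y = "\<lambda>i j. X i j + complex_of_real t * cid n i j"
  have t0: "0 < t" using t by (meson le_less_trans real_sqrt_ge_zero frob2_nonneg)
  show low: "(t - sqrt (frob2 n X)) * cnorm2 n w \<le> qform n ?Y w" for w
    using qform_lower[of n X w] by (simp add: qform_lin qform_cid algebra_simps)
  have mY: "mat_on n ?Y" using mX by (simp add: mat_on_def cid_in)
  have hY: "hermitian n ?Y" by (rule hermitian_add_scaled[OF hX hermitian_cid])
  have psd: "0 \<le> qform n ?Y w" for w
    using low[of w] t cnorm2_nonneg[of n w] by (smt (verit) mult_nonneg_nonneg)
  define H where "H = cscale (complex_of_real (- 1 / t)) X"
  define q where "q = sqrt (frob2 n X) / t"
  have mH: "mat_on n H" using mX by (simp add: H_def)
  have bH: "contraction n H q" unfolding contraction_def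
  proof (intro conjI allI)
    show "0 \<le> q" using t0 by (simp add: q_def frob2_nonneg)
    show "q < 1" using t t0 by (simp add: q_def)
    fix v
    have "cnorm2 n (cmatvec n H v) = (1 / t)\<^sup>2 * cnorm2 n (cmatvec n X v)"
      by (simp add: H_def cnorm2_cmatvec_cscale power_divide norm_divide)
    also have "\<dots> \<le> (1 / t)\<^sup>2 * (frob2 n X * cnorm2 n v)" by (intro mult_left_mono cnorm2_cmatvec_le) simp
    also have "\<dots> = q\<^sup>2 * cnorm2 n v" by (simp add: q_def power_divide frob2_nonneg)
    finally show "cnorm2 n (cmatvec n H v) \<le> q\<^sup>2 * cnorm2 n v" .
  qed
  have Yeq: "?Y = cscale (complex_of_real t) (binom_series n 1 H)"
    unfolding binom_series_1[OF mH] using t0 mX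
    by (auto simp: fun_eq_iff cscale_def H_def cid_in mat_on_def algebra_simps)
  define Zt where "Zt = cscale (complex_of_real (1 / t)) (binom_series n (-1) H)"
  have "cmmul n ?Y Zt = cid n"
    unfolding Yeq Zt_def cmmul_cscale binom_series_mult[OF bH] using t0
    by (simp add: binom_series_0 cscale_def)
  moreover have "cmmul n Zt ?Y = cid n"
    unfolding Yeq Zt_def cmmul_cscale binom_series_mult[OF bH] using t0
    by (simp add: binom_series_0 cscale_def)
  moreover have "mat_on n Zt" by (simp add: Zt_def)
  ultimately show "pos_inv n ?Y" unfolding pos_inv_iff using mY hY psd by blast
qed

lemma shiftm_eq: "mat_on n X \<Longrightarrow> shiftm n t (mneg X) = (\<lambda>i j. X i j + complex_of_real t * cid n i j)"
  by (auto simp: fun_eq_iff shiftm_def mneg_def cid_in mat_on_def)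

lemma opnorm_square_le:
  assumes c: "0 \<le> c" and bound: "\<And>v. cnorm2 n (cmatvec n S v) \<le> c * cnorm2 n v"
  shows "(opnorm n n S)\<^sup>2 \<le> c"
proof -
  let ?G = "{sqrt (\<Sum>i<n. (cmod (\<Sum>j<n. S i j * v j))\<^sup>2) | v. (\<Sum>j<n. (cmod (v j))\<^sup>2) \<le> 1}"
  have ub: "x \<le> sqrt c" if "x \<in> ?G" for x
  proof -
    from that obtain v where x: "x = sqrt (cnorm2 n (cmatvec n S v))" and v: "cnorm2 n v \<le> 1"
      by (auto simp: cnorm2_def cmatvec_def)
    have "c * cnorm2 n v \<le> c" using mult_left_mono[OF v c] by simp
    with bound[of v] show ?thesis by (simp add: x)
  qed
  have z: "0 \<in> ?G" by (auto intro!: exI[of _ "\<lambda>_. 0"])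
  have "0 \<le> Sup ?G" by (rule cSup_upper[OF z bdd_aboveI[OF ub]])
  moreover have "Sup ?G \<le> sqrt c" by (rule cSup_least[OF _ ub]) (use z in blast)
  ultimately have "(Sup ?G)\<^sup>2 \<le> (sqrt c)\<^sup>2" by (rule power_mono[rotated])
  then show ?thesis using c by (simp add: opnorm_def)
qed

lemma opnorm_inv_sqrt_le:
  assumes pY: "pos_inv n Y" and m: "0 < m" and low: "\<And>w. m * cnorm2 n w \<le> qform n Y w"
  shows "(opnorm n n (inv_sqrt n Y))\<^sup>2 \<le> 1 / m"
proof (rule opnorm_square_le)
  show "0 \<le> 1 / m" using m by simp
  have hY: "hermitian n Y" using pY unfolding pos_inv_iff by blast
  fix v
  have "cnorm2 n (cmatvec n (inv_sqrt n Y) v) = qform n (cmmul n (inv_sqrt n Y) (inv_sqrt n Y)) v"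
    by (rule qform_square[OF inv_sqrt_facts(2)[OF pY], symmetric])
  also have "\<dots> \<le> cnorm2 n v / m" by (rule qform_inverse_le[OF hY inv_sqrt_facts(5)[OF pY] m low])
  finally show "cnorm2 n (cmatvec n (inv_sqrt n Y) v) \<le> 1 / m * cnorm2 n v" by simp
qed

section \<open>Matrices over a star vector space\<close>

definition mtensor :: "(complex \<Rightarrow> 'w::ab_group_add \<Rightarrow> 'w) \<Rightarrow> nat \<Rightarrow> (nat \<Rightarrow> nat \<Rightarrow> complex) \<Rightarrow> 'w
    \<Rightarrow> nat \<Rightarrow> nat \<Rightarrow> 'w" where
  "mtensor smul n M e = (\<lambda>i j. if i < n \<and> j < n then smul (M i j) e else 0)"

lemma sconj_in: "i < k \<Longrightarrow> j < k \<Longrightarrow> sconj smul n k X A i j = (\<Sum>p<n. \<Sum>q<n. smul (cnj (X p i) * X q j) (A p q))"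
  by (simp add: sconj_def)

lemma sconj_out: "\<not> (i < k \<and> j < k) \<Longrightarrow> sconj smul n k X A i j = 0"
  unfolding sconj_def by auto

lemma mat_on_sconj: "mat_on k (sconj smul n k X A)"
  unfolding mat_on_def by (intro allI impI) (rule sconj_out)

context
  fixes smul :: "complex \<Rightarrow> 'w::ab_group_add \<Rightarrow> 'w"
  assumes ms: "module smul"
begin

lemma sconj_madd: "sconj smul n n R (madd A B) = madd (sconj smul n n R A) (sconj smul n n R B)"
  by (auto simp: fun_eq_iff sconj_def madd_def module.scale_right_distrib[OF ms] sum.distrib)

lemma sconj_mneg: "sconj smul n n R (mneg A) = mneg (sconj smul n n R A)"
  by (auto simp: fun_eq_iff sconj_def mneg_def module.scale_minus_right[OF ms] sum_negf)

lemma sconj_comp: "sconj smul n n R (sconj smul n n S M) = sconj smul n n (cmmul n S R) M"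
proof (intro ext)
  fix i j
  show "sconj smul n n R (sconj smul n n S M) i j = sconj smul n n (cmmul n S R) M i j"
  proof (cases "i < n \<and> j < n")
    case False then show ?thesis by (simp add: sconj_out)
  next
    case True
    then have i: "i < n" and j: "j < n" by auto
    let ?f = "\<lambda>p q a b. smul (cnj (R p i) * R q j * (cnj (S a p) * S b q)) (M a b)"
    have "sconj smul n n R (sconj smul n n S M) i j = (\<Sum>p<n. \<Sum>q<n. \<Sum>a<n. \<Sum>b<n. ?f p q a b)"
      unfolding sconj_in[OF i j]
      by (intro sum.cong refl) (simp add: sconj_in module.scale_sum_right[OF ms] module.scale_scale[OF ms])
    also have "\<dots> = (\<Sum>p<n. \<Sum>a<n. \<Sum>q<n. \<Sum>b<n. ?f p q a b)"
      by (intro sum.cong refl sum.swap)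
    also have "\<dots> = (\<Sum>a<n. \<Sum>p<n. \<Sum>q<n. \<Sum>b<n. ?f p q a b)" by (rule sum.swap)
    also have "\<dots> = (\<Sum>a<n. \<Sum>p<n. \<Sum>b<n. \<Sum>q<n. ?f p q a b)"
      by (intro sum.cong refl sum.swap)
    also have "\<dots> = (\<Sum>a<n. \<Sum>b<n. \<Sum>p<n. \<Sum>q<n. ?f p q a b)"
      by (intro sum.cong refl sum.swap)
    also have "\<dots> = (\<Sum>a<n. \<Sum>b<n. smul (\<Sum>p<n. \<Sum>q<n. cnj (R p i) * R q j * (cnj (S a p) * S b q)) (M a b))"
      by (simp add: module.scale_sum_left[OF ms])
    also have "\<dots> = (\<Sum>a<n. \<Sum>b<n. smul (cnj (cmmul n S R a i) * cmmul n S R b j) (M a b))"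
    proof (intro sum.cong refl)
      fix a b assume a: "a \<in> {..<n}" and b: "b \<in> {..<n}"
      have "(\<Sum>p<n. \<Sum>q<n. cnj (R p i) * R q j * (cnj (S a p) * S b q))
          = (\<Sum>p<n. cnj (S a p * R p i)) * (\<Sum>q<n. S b q * R q j)"
        by (simp add: sum_product mult_ac) (rule sum.swap)
      also have "\<dots> = cnj (cmmul n S R a i) * cmmul n S R b j"
        using a b i j by (simp add: cmmul_in cnj_sum)
      finally show "smul (\<Sum>p<n. \<Sum>q<n. cnj (R p i) * R q j * (cnj (S a p) * S b q)) (M a b)
          = smul (cnj (cmmul n S R a i) * cmmul n S R b j) (M a b)" by simp
    qed
    also have "\<dots> = sconj smul n n (cmmul n S R) M i j" by (simp add: sconj_in i j)
    finally show ?thesis .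
  qed
qed

lemma sconj_cid: "mat_on n M \<Longrightarrow> sconj smul n n (cid n) M = M"
proof (intro ext)
  fix i j assume m: "mat_on n M"
  show "sconj smul n n (cid n) M i j = M i j"
  proof (cases "i < n \<and> j < n")
    case True
    then have i: "i < n" and j: "j < n" by auto
    have t: "smul (cnj (cid n p i) * cid n q j) (M p q) = (if p = i then (if q = j then M p q else 0) else 0)"
      if "p < n" "q < n" for p q
      using that i j by (auto simp: cid_in module.scale_zero_left[OF ms] module.scale_one[OF ms])
    have "sconj smul n n (cid n) M i j = (\<Sum>p<n. \<Sum>q<n. if p = i then (if q = j then M p q else 0) else 0)"
      unfolding sconj_in[OF i j] by (intro sum.cong refl) (simp add: t)
    also have "\<dots> = (\<Sum>p<n. if p = i then M p j else 0)"
      by (intro sum.cong refl) (simp add: j)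
    also have "\<dots> = M i j" using i by simp
    finally show ?thesis .
  next
    case False
    then show ?thesis using m by (auto simp: sconj_out mat_on_def)
  qed
qed

lemma sconj_mtensor:
  "sconj smul n n R (mtensor smul n M e) = mtensor smul n (cmmul n (cadj R) (cmmul n M R)) e"
proof (intro ext)
  fix i j
  show "sconj smul n n R (mtensor smul n M e) i j = mtensor smul n (cmmul n (cadj R) (cmmul n M R)) e i j"
  proof (cases "i < n \<and> j < n")
    case True
    then have i: "i < n" and j: "j < n" by auto
    have "sconj smul n n R (mtensor smul n M e) i j = (\<Sum>p<n. \<Sum>q<n. smul (cnj (R p i) * R q j * M p q) e)"
      unfolding sconj_in[OF i j] by (intro sum.cong refl) (simp add: mtensor_def module.scale_scale[OF ms])
    also have "\<dots> = smul (\<Sum>p<n. \<Sum>q<n. cnj (R p i) * R q j * M p q) e"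
      by (simp add: module.scale_sum_left[OF ms])
    also have "(\<Sum>p<n. \<Sum>q<n. cnj (R p i) * R q j * M p q) = cmmul n (cadj R) (cmmul n M R) i j"
      using i j by (auto simp: cmmul_in cadj_def sum_distrib_left mult_ac intro!: sum.cong)
    finally show ?thesis using i j by (simp add: mtensor_def)
  next
    case False then show ?thesis by (auto simp: sconj_out mtensor_def)
  qed
qed

lemma idt_mtensor: "idt n (smul c e) = mtensor smul n (cscale c (cid n)) e"
  by (auto simp: fun_eq_iff idt_def mtensor_def cscale_def cid_in module.scale_zero_left[OF ms])

end

lemma star_space_module: "star_space smul st \<Longrightarrow> module smul"
  by (simp add: star_space_def module_iff_vector_space)

lemma star_space_additive: "star_space smul st \<Longrightarrow> Modules.additive st"
  unfolding star_space_def by (simp add: Modules.additive_def)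

lemma star_space_scale: "star_space smul st \<Longrightarrow> st (smul c x) = smul (cnj c) (st x)"
  unfolding star_space_def by blast

lemma star_space_invol: "star_space smul st \<Longrightarrow> st (st x) = x"
  unfolding star_space_def by blast

lemma msaD: "A \<in> msa st n \<Longrightarrow> i < n \<Longrightarrow> j < n \<Longrightarrow> A i j = st (A j i)"
  unfolding msa_def by blast

lemma msa_mat_on: "A \<in> msa st n \<Longrightarrow> mat_on n A"
  unfolding msa_def by blast

lemma sconj_msa:
  assumes ss: "star_space smul st" and A: "A \<in> msa st n"
  shows "sconj smul n n S A \<in> msa st n"
  unfolding msa_def
proof (intro CollectI conjI allI impI)
  show "mat_on n (sconj smul n n S A)" by (rule mat_on_sconj)
  fix i j assume i: "i < n" and j: "j < n"
  have "st (sconj smul n n S A j i) = (\<Sum>p<n. \<Sum>q<n. smul (S p j * cnj (S q i)) (st (A p q)))"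
    by (simp add: sconj_in i j Modules.additive.sum[OF star_space_additive[OF ss]] star_space_scale[OF ss])
  also have "\<dots> = (\<Sum>p<n. \<Sum>q<n. smul (S p j * cnj (S q i)) (A q p))"
    by (intro sum.cong refl) (metis A lessThan_iff msaD ss star_space_invol)
  also have "\<dots> = (\<Sum>q<n. \<Sum>p<n. smul (S p j * cnj (S q i)) (A q p))" by (rule sum.swap)
  also have "\<dots> = sconj smul n n S A i j" by (simp add: sconj_in i j mult.commute)
  finally show "sconj smul n n S A i j = st (sconj smul n n S A j i)" by simp
qed

lemma mneg_mneg[simp]: "mneg (mneg A) = (A :: nat \<Rightarrow> nat \<Rightarrow> 'a::group_add)"
  by (simp add: mneg_def)

lemma mneg_msa:
  fixes A :: "nat \<Rightarrow> nat \<Rightarrow> 'a::ab_group_add"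
  assumes ss: "star_space smul st" and A: "A \<in> msa st n"
  shows "mneg A \<in> msa st n"
  unfolding msa_def
proof (intro CollectI conjI allI impI)
  show "mat_on n (mneg A)" using msa_mat_on[OF A] by (simp add: mat_on_def mneg_def)
  fix i j assume "i < n" "j < n"
  then show "mneg A i j = st (mneg A j i)"
    unfolding mneg_def using msaD[OF A] Modules.additive.minus[OF star_space_additive[OF ss]] by metis
qed

lemma mapn_msa:
  assumes comm: "\<And>x. f (st1 x) = st2 (f x)" and A: "A \<in> msa st1 n"
  shows "mapn n f A \<in> msa st2 n"
  unfolding msa_def
proof (intro CollectI conjI allI impI)
  show "mat_on n (mapn n f A)" by (simp add: mat_on_def mapn_def)
  fix i j assume "i < n" "j < n"
  then show "mapn n f A i j = st2 (mapn n f A j i)"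
    unfolding mapn_def using msaD[OF A] comm by metis
qed

lemma idt_msa: "st e = e \<Longrightarrow> star_space smul st \<Longrightarrow> idt n e \<in> msa st n"
  unfolding msa_def mat_on_def idt_def by (simp add: Modules.additive.zero[OF star_space_additive])

lemma mapn_mneg:
  fixes f :: "'a::ab_group_add \<Rightarrow> 'b::ab_group_add"
  shows "(\<And>x. f (- x) = - f x) \<Longrightarrow> mapn n f (mneg A) = mneg (mapn n f A)"
  by (auto simp: fun_eq_iff mapn_def mneg_def)

lemma mapn_sconj:
  assumes add: "\<And>x y. f (x + y) = f x + f y" and sc: "\<And>c x. f (s1 c x) = s2 c (f x)"
  shows "mapn n f (sconj s1 n n S M) = sconj s2 n n S (mapn n f M)"
proof -
  have ad: "Modules.additive f" by (simp add: Modules.additive_def add)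
  show ?thesis
    by (auto simp: fun_eq_iff mapn_def sconj_def Modules.additive.sum[OF ad] sc intro!: sum.cong)
qed

lemma mat_on_mapn: "mat_on n (mapn n f A)" by (simp add: mat_on_def mapn_def)

section \<open>Operator systems\<close>

lemma operator_systemD:
  assumes "operator_system smul st P e"
  shows operator_system_star_space: "star_space smul st"
    and operator_system_unit_self_adjoint: "st e = e"
    and cone_add: "\<And>n A B. 0 < n \<Longrightarrow> A \<in> P n \<Longrightarrow> B \<in> P n \<Longrightarrow> madd A B \<in> P n"
    and cone_scale: "\<And>n A t. 0 < n \<Longrightarrow> A \<in> P n \<Longrightarrow> 0 \<le> t \<Longrightarrow> mscale smul (complex_of_real t) A \<in> P n"
    and cone_sconj: "\<And>n k X B. 0 < n \<Longrightarrow> 0 < k \<Longrightarrow> B \<in> P n \<Longrightarrow> sconj smul n k X B \<in> P k"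
    and order_unit_dominates: "\<And>n A. 0 < n \<Longrightarrow> A \<in> msa st n
       \<Longrightarrow> \<exists>t. 0 < t \<and> madd (idt n (smul (complex_of_real t) e)) (mneg A) \<in> P n"
    and archimedean_cone: "\<And>n A. 0 < n \<Longrightarrow> A \<in> msa st n
       \<Longrightarrow> (\<And>\<epsilon>. 0 < \<epsilon> \<Longrightarrow> madd (idt n (smul (complex_of_real \<epsilon>) e)) A \<in> P n) \<Longrightarrow> A \<in> P n"
  using assms unfolding operator_system_def by (elim conjE; simp)+

lemma madd_idt_idt:
  assumes "module smul"
  shows "madd (idt n (smul a e)) (madd (idt n (smul b e)) A) = madd (idt n (smul (a + b) e)) A"
  by (auto simp: fun_eq_iff madd_def idt_def module.scale_left_distrib[OF assms])

lemma unit_shift_msa: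
  assumes ss: "star_space smul st" and e: "st e = e" and A: "A \<in> msa st n"
  shows "madd (idt n (smul (complex_of_real s) e)) A \<in> msa st n"
  unfolding msa_def
proof (intro CollectI conjI allI impI)
  let ?B = "madd (idt n (smul (complex_of_real s) e)) A"
  show "mat_on n ?B" using msa_mat_on[OF A] by (simp add: mat_on_def madd_def idt_def)
  fix i j assume i: "i < n" and j: "j < n"
  have "st (idt n (smul (complex_of_real s) e) j i) = idt n (smul (complex_of_real s) e) i j"
    by (simp add: idt_def star_space_scale[OF ss] e Modules.additive.zero[OF star_space_additive[OF ss]])
  then show "?B i j = st (?B j i)"
    by (simp add: madd_def Modules.additive.add[OF star_space_additive[OF ss]] msaD[OF A j i]
        star_space_invol[OF ss])
qed

lemma unit_in_cone:
  assumes os: "operator_system smul st P e" and n: "0 < n"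
  shows "idt n e \<in> P n"
proof -
  note ss = operator_system_star_space[OF os]
  have ms: "module smul" by (rule star_space_module[OF ss])
  have "mneg (idt n e) \<in> msa st n"
    by (rule mneg_msa[OF ss idt_msa[OF operator_system_unit_self_adjoint[OF os] ss]])
  from order_unit_dominates[OF os n this] obtain t where t: "0 < t"
    and P1: "madd (idt n (smul (complex_of_real t) e)) (mneg (mneg (idt n e))) \<in> P n" by blast
  have "madd (idt n (smul (complex_of_real t) e)) (mneg (mneg (idt n e)))
      = idt n (smul (complex_of_real (t + 1)) e)"
    by (auto simp: fun_eq_iff madd_def mneg_def idt_def module.scale_left_distrib[OF ms]
        module.scale_one[OF ms])
  with P1 t have "mscale smul (complex_of_real (1 / (t + 1))) (idt n (smul (complex_of_real (t + 1)) e)) \<in> P n"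
    by (intro cone_scale[OF os n]) auto
  moreover have
    "mscale smul (complex_of_real (1 / (t + 1))) (idt n (smul (complex_of_real (t + 1)) e)) = idt n e"
  proof -
    have "complex_of_real t + 1 \<noteq> 0"
      by (metis add_pos_pos less_irrefl of_real_1 of_real_add of_real_eq_0_iff t zero_less_one)
    then show ?thesis
      by (auto simp: fun_eq_iff mscale_def idt_def module.scale_scale[OF ms]
          module.scale_zero_right[OF ms] module.scale_one[OF ms])
  qed
  ultimately show ?thesis by simp
qed

lemma unit_shift_in_cone:
  assumes os: "operator_system smul st P e" and n: "0 < n" and A: "A \<in> P n" and s: "0 \<le> s"
  shows "madd (idt n (smul (complex_of_real s) e)) A \<in> P n"
proof -
  have ms: "module smul" by (rule star_space_module[OF operator_system_star_space[OF os]])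
  have "mscale smul (complex_of_real s) (idt n e) = idt n (smul (complex_of_real s) e)"
    by (auto simp: fun_eq_iff mscale_def idt_def module.scale_zero_right[OF ms])
  then show ?thesis
    using cone_add[OF os n cone_scale[OF os n unit_in_cone[OF os n] s] A] by simp
qed

lemma in_cone_if_small_unit_shifts:
  assumes os: "operator_system smul st P e" and n: "0 < n" and B: "B \<in> msa st n"
    and shifts: "\<And>\<epsilon>. 0 < \<epsilon> \<Longrightarrow> \<exists>t<\<epsilon>. madd (idt n (smul (complex_of_real t) e)) B \<in> P n"
  shows "B \<in> P n"
proof (rule archimedean_cone[OF os n B])
  fix \<epsilon> :: real assume "0 < \<epsilon>"
  then obtain t where t: "t < \<epsilon>" and tB: "madd (idt n (smul (complex_of_real t) e)) B \<in> P n"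
    using shifts by blast
  have "madd (idt n (smul (complex_of_real (\<epsilon> - t)) e)) (madd (idt n (smul (complex_of_real t) e)) B) \<in> P n"
    using t by (intro unit_shift_in_cone[OF os n tB]) simp
  then show "madd (idt n (smul (complex_of_real \<epsilon>) e)) B \<in> P n"
    by (simp add: madd_idt_idt[OF star_space_module[OF operator_system_star_space[OF os]]] flip: of_real_add)
qed

lemma order_gauge_le_imp_in_cone:
  assumes os: "operator_system smul st P e" and n: "0 < n" and B: "B \<in> msa st n"
    and le: "order_gauge smul P e n B \<le> s"
  shows "madd (idt n (smul (complex_of_real s) e)) (mneg B) \<in> P n"
proof -
  note ss = operator_system_star_space[OF os]
  let ?G = "{t::real. 0 < t \<and> madd (idt n (smul (complex_of_real t) e)) (mneg B) \<in> P n}"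
  have ne: "?G \<noteq> {}" using order_unit_dominates[OF os n B] by blast
  have bb: "bdd_below ?G" by (rule bdd_belowI[of _ 0]) auto
  show ?thesis
  proof (rule in_cone_if_small_unit_shifts[OF os n])
    show "madd (idt n (smul (complex_of_real s) e)) (mneg B) \<in> msa st n"
      by (rule unit_shift_msa[OF ss operator_system_unit_self_adjoint[OF os] mneg_msa[OF ss B]])
    fix \<epsilon> :: real assume "0 < \<epsilon>"
    with le have "Inf ?G < s + \<epsilon>" by (simp add: order_gauge_def)
    then obtain t where t: "t \<in> ?G" "t < s + \<epsilon>" using cInf_less_iff[OF ne bb] by blast
    have "madd (idt n (smul (complex_of_real (t - s)) e)) (madd (idt n (smul (complex_of_real s) e)) (mneg B))
        = madd (idt n (smul (complex_of_real t) e)) (mneg B)"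
      by (simp add: madd_idt_idt[OF star_space_module[OF ss]] flip: of_real_add)
    with t show "\<exists>t'<\<epsilon>. madd (idt n (smul (complex_of_real t') e))
        (madd (idt n (smul (complex_of_real s) e)) (mneg B)) \<in> P n"
      by (intro exI[of _ "t - s"]) auto
  qed
qed

section \<open>Complete positivity of the unital extension\<close>

lemma Linf_MOSD:
  assumes "Linf_MOS smul st \<nu>"
  shows Linf_MOS_star_space: "star_space smul st"
    and Linf_MOS_nonneg: "\<And>n A. 0 < n \<Longrightarrow> A \<in> msa st n \<Longrightarrow> 0 \<le> \<nu> n A"
    and Linf_MOS_sconj: "\<And>n k X A. 0 < n \<Longrightarrow> 0 < k \<Longrightarrow> A \<in> msa st n
       \<Longrightarrow> \<nu> k (sconj smul n k X A) \<le> (opnorm n k X)\<^sup>2 * \<nu> n A"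
  using assms unfolding Linf_MOS_def proper_gauge_def by (elim conjE; simp)+

text \<open>\<open>u\<^sub>n\<close> is an infimum, and \<open>Inf {}\<close> is unspecified: the defining set must be shown nonempty.\<close>

lemma unorm_witness_exists:
  assumes L: "Linf_MOS smul st \<nu>" and n: "0 < n" and A: "A \<in> msa st n" and X: "X \<in> msa cnj n"
  shows "\<exists>t>0. pos_inv n (shiftm n t X) \<and> \<nu> n (sconj smul n n (inv_sqrt n (shiftm n t X)) A) \<le> 1"
proof -
  define X' where "X' = mneg X"
  have mX: "mat_on n X'" and hX: "hermitian n X'"
    using X by (simp_all add: X'_def msa_cnj_iff hermitian_mneg)
  have nuA: "0 \<le> \<nu> n A" by (rule Linf_MOS_nonneg[OF L n A])
  define m where "m = 1 + \<nu> n A"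
  define t where "t = sqrt (frob2 n X') + m"
  have m: "1 \<le> m" using nuA by (simp add: m_def)
  have Kt: "sqrt (frob2 n X') < t" using m by (simp add: t_def)
  have Y: "shiftm n t X = (\<lambda>i j. X' i j + complex_of_real t * cid n i j)"
    using shiftm_eq[OF mX] by (simp add: X'_def)
  have pY: "pos_inv n (shiftm n t X)" using pos_inv_shift(1)[OF mX hX Kt] by (simp add: Y)
  have "m * cnorm2 n w \<le> qform n (shiftm n t X) w" for w
    using pos_inv_shift(2)[OF mX hX Kt, of w] unfolding Y by (simp add: t_def)
  then have "(opnorm n n (inv_sqrt n (shiftm n t X)))\<^sup>2 \<le> 1 / m"
    using opnorm_inv_sqrt_le[OF pY, of m] m by simp
  then have "\<nu> n (sconj smul n n (inv_sqrt n (shiftm n t X)) A) \<le> 1 / m * \<nu> n A"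
    using Linf_MOS_sconj[OF L n n A] by (meson mult_right_mono nuA order_trans)
  also have "\<dots> \<le> 1" using m by (simp add: m_def)
  finally have "\<nu> n (sconj smul n n (inv_sqrt n (shiftm n t X)) A) \<le> 1" .
  moreover have "0 < t" using Kt by (meson le_less_trans real_sqrt_ge_zero frob2_nonneg)
  ultimately show ?thesis using pY by blast
qed

lemma unorm_eq_0_witnesses:
  assumes L: "Linf_MOS smul st \<nu>" and n: "0 < n" and A: "A \<in> msa st n" and X: "X \<in> msa cnj n"
    and u0: "unorm smul \<nu> n A X = 0" and \<epsilon>: "0 < \<epsilon>"
  shows "\<exists>t<\<epsilon>. pos_inv n (shiftm n t X) \<and> \<nu> n (sconj smul n n (inv_sqrt n (shiftm n t X)) A) \<le> 1"
proof -
  define T where "T = {t. 0 < t \<and> pos_inv n (shiftm n t X)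
    \<and> \<nu> n (sconj smul n n (inv_sqrt n (shiftm n t X)) A) \<le> 1}"
  have "T \<noteq> {}" using unorm_witness_exists[OF L n A X] by (auto simp: T_def)
  moreover have "bdd_below T" by (rule bdd_belowI[of _ 0]) (simp add: T_def)
  moreover have "Inf T < \<epsilon>" using u0 \<epsilon> by (simp add: unorm_def T_def)
  ultimately obtain t where "t \<in> T" "t < \<epsilon>" using cInf_less_iff by blast
  then show ?thesis by (auto simp: T_def)
qed

lemma unital_ext_n_msa:
  assumes ssW: "star_space smulW stW" and e: "stW e = e" and \<phi>: "\<And>x. \<phi> (stV x) = stW (\<phi> x)"
    and A: "A \<in> msa stV n" and X: "X \<in> msa cnj n"
  shows "unital_ext_n (+) smulW \<phi> e n (A, X) \<in> msa stW n"
  unfolding msa_def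
proof (intro CollectI conjI allI impI)
  let ?B = "unital_ext_n (+) smulW \<phi> e n (A, X)"
  show "mat_on n ?B" by (simp add: mat_on_def unital_ext_n_def)
  fix i j assume i: "i < n" and j: "j < n"
  have "stW (?B j i) = \<phi> (stV (A j i)) + smulW (cnj (X j i)) e"
    using i j by (simp add: unital_ext_n_def Modules.additive.add[OF star_space_additive[OF ssW]] \<phi>
        star_space_scale[OF ssW] e)
  also have "\<dots> = ?B i j"
    using i j msaD[OF A i j] msaD[OF X i j] by (simp add: unital_ext_n_def)
  finally show "?B i j = stW (?B j i)" by simp
qed

lemma sconj_unit_minus_conj:
  assumes ms: "module smul" and SR: "cmmul n S R = cid n" and RR: "cmmul n (cadj R) R = Y"
    and mR: "mat_on n R" and mM: "mat_on n M"
  shows "sconj smul n n R (madd (idt n e) (mneg (sconj smul n n S (mneg M)))) = madd (mtensor smul n Y e) M"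
proof -
  have "idt n e = idt n (smul 1 e)" by (simp add: module.scale_one[OF ms])
  then show ?thesis
    unfolding sconj_madd[OF ms] sconj_mneg[OF ms] sconj_comp[OF ms] SR idt_mtensor[OF ms] sconj_mtensor[OF ms]
    using RR by (simp add: sconj_mneg[OF ms] sconj_comp[OF ms] SR sconj_cid[OF ms] sconj_mtensor[OF ms]
        cmmul_cid_left mR mM)
qed

lemma mtensor_shift_unital_ext:
  assumes ms: "module smul" and mX: "mat_on n X"
  shows "madd (mtensor smul n (shiftm n t (mneg X)) e) (mapn n \<phi> A)
    = madd (idt n (smul (complex_of_real t) e)) (unital_ext_n (+) smul \<phi> e n (A, X))"
  using mX by (auto simp: fun_eq_iff shiftm_eq madd_def mtensor_def mapn_def idt_def
      unital_ext_n_def cid_in module.scale_left_distrib[OF ms] module.scale_zero_left[OF ms])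

lemma unit_shift_unital_ext_in_cone:
  assumes ssV: "star_space smulV stV" and os: "operator_system smulW stW P e"
    and \<phi>: "completely_gauge_contractive smulV stV \<nu> smulW stW (order_gauge smulW P e) \<phi>"
    and n: "0 < n" and A: "A \<in> msa stV n" and X: "X \<in> msa cnj n"
    and pY: "pos_inv n (shiftm n t (mneg X))"
    and witness: "\<nu> n (sconj smulV n n (inv_sqrt n (shiftm n t (mneg X))) (mneg A)) \<le> 1"
  shows "madd (idt n (smulW (complex_of_real t) e)) (unital_ext_n (+) smulW \<phi> e n (A, X)) \<in> P n"
proof -
  have msW: "module smulW" by (rule star_space_module[OF operator_system_star_space[OF os]])
  have hom: "module_hom smulV smulW \<phi>" and \<phi>_st: "\<And>x. \<phi> (stV x) = stW (\<phi> x)"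
    and gauge: "\<And>n A. 0 < n \<Longrightarrow> A \<in> msa stV n \<Longrightarrow> order_gauge smulW P e n (mapn n \<phi> A) \<le> \<nu> n A"
    using \<phi> by (simp_all add: completely_gauge_contractive_def module_hom_iff_linear)
  define Y where "Y = shiftm n t (mneg X)"
  define S where "S = inv_sqrt n Y"
  define R where "R = cmmul n S Y"
  have SR: "cmmul n S R = cid n" and RR: "cmmul n (cadj R) R = Y"
    using inv_sqrt_facts[OF pY] by (simp_all add: S_def R_def Y_def)
  define C where "C = sconj smulV n n S (mneg A)"
  have C: "C \<in> msa stV n" unfolding C_def by (rule sconj_msa[OF ssV mneg_msa[OF ssV A]])
  have mapC: "mapn n \<phi> C = sconj smulW n n S (mneg (mapn n \<phi> A))"
    unfolding C_def mapn_sconj[of \<phi> smulV smulW, OF module_hom.add[OF hom] module_hom.scale[OF hom]]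
      mapn_mneg[of \<phi>, OF module_hom.neg[OF hom]] ..
  have "order_gauge smulW P e n (mapn n \<phi> C) \<le> 1"
    using gauge[OF n C] witness by (simp add: C_def S_def Y_def)
  from order_gauge_le_imp_in_cone[OF os n mapn_msa[where f = \<phi>, OF \<phi>_st C] this]
  have "madd (idt n e) (mneg (mapn n \<phi> C)) \<in> P n" by (simp add: module.scale_one[OF msW])
  then have "sconj smulW n n R (madd (idt n e) (mneg (mapn n \<phi> C))) \<in> P n"
    by (rule cone_sconj[OF os n n])
  also have "sconj smulW n n R (madd (idt n e) (mneg (mapn n \<phi> C))) = madd (mtensor smulW n Y e) (mapn n \<phi> A)"
    unfolding mapC by (rule sconj_unit_minus_conj[OF msW SR RR _ mat_on_mapn]) (simp add: R_def)
  also have "\<dots> = madd (idt n (smulW (complex_of_real t) e)) (unital_ext_n (+) smulW \<phi> e n (A, X))"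
    unfolding Y_def by (rule mtensor_shift_unital_ext[OF msW]) (use X in \<open>simp add: msa_cnj_iff\<close>)
  finally show ?thesis .
qed

theorem lemma3p12:
  fixes smulV :: "complex \<Rightarrow> 'v::ab_group_add \<Rightarrow> 'v" and stV :: "'v \<Rightarrow> 'v"
    and \<nu> :: "nat \<Rightarrow> (nat \<Rightarrow> nat \<Rightarrow> 'v) \<Rightarrow> real"
    and smulW :: "complex \<Rightarrow> 'w::ab_group_add \<Rightarrow> 'w" and stW :: "'w \<Rightarrow> 'w"
    and P :: "nat \<Rightarrow> (nat \<Rightarrow> nat \<Rightarrow> 'w) set" and e :: 'w
    and \<phi> :: "'v \<Rightarrow> 'w"
  assumes "Linf_MOS smulV stV \<nu>"
    and "operator_system smulW stW P e"
    and "completely_gauge_contractive smulV stV \<nu> smulW stW (order_gauge smulW P e) \<phi>"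
  shows "completely_positive_unital_ext smulV stV \<nu> smulW P e \<phi>"
  unfolding completely_positive_unital_ext_def
proof (intro allI impI ballI)
  fix n :: nat and AX assume n: "0 < n" and "AX \<in> unit_pos smulV stV \<nu> n"
  then obtain A X where AX: "AX = (A, X)" and A: "A \<in> msa stV n" and X: "X \<in> msa cnj n"
    and u0: "unorm smulV \<nu> n (mneg A) (mneg X) = 0"
    unfolding unit_pos_def by auto
  have ssV: "star_space smulV stV" by (rule Linf_MOS_star_space[OF assms(1)])
  have mX: "mneg X \<in> msa cnj n" using X by (simp add: msa_cnj_iff hermitian_mneg)
  show "unital_ext_n (+) smulW \<phi> e n AX \<in> P n"
    unfolding AX
  proof (rule in_cone_if_small_unit_shifts[OF assms(2) n])
    show "unital_ext_n (+) smulW \<phi> e n (A, X) \<in> msa stW n"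
      using assms(3) by (intro unital_ext_n_msa[OF operator_system_star_space[OF assms(2)]
          operator_system_unit_self_adjoint[OF assms(2)] _ A X]) (simp add: completely_gauge_contractive_def)
    fix \<epsilon> :: real assume "0 < \<epsilon>"
    then show "\<exists>t<\<epsilon>. madd (idt n (smulW (complex_of_real t) e)) (unital_ext_n (+) smulW \<phi> e n (A, X)) \<in> P n"
      using unorm_eq_0_witnesses[OF assms(1) n mneg_msa[OF ssV A] mX u0]
        unit_shift_unital_ext_in_cone[OF ssV assms(2,3) n A X] by blast
  qed
qed

end
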